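(* Let $$f=\sum_{i+j\leq d} \frac{d!}{i!\, j!\, (d-(i+j))!}\, b_{i,j}\, x_1^{d-(i+j)} x_2^i x_3^j, \qquad b_{i,j}\in \mathbb{K}[A],$$ be an irreducible covariant of order $d$ of the ternary form of degree $n$. Then: (i) the vector space $B_d:=\langle \{b_{i,j}\},\ i+j\leq d\rangle$ is an irreducible $sl_3$-module isomorphic to $\Gamma_{d,0}$; (ii) the element $b_{0,0}$ is a highest vector of the $sl_3$-module $B_d$ with highest weight $[d,0]$; (iii) the covariant $f$ is the Casimir element $f=\Delta(B_d,S^d(X))$ and can be written as $$f=\sum_{i+j\leq d} \frac{1}{i!\, j!}\,\hat D_1^i \hat D_3^j(b_{0,0})\, x_1^{d-(i+j)} x_2^i x_3^j .$$
   Context: $\mathbb{K}$ is a field of characteristic zero. $T_n$ is the space of ternary forms $u(x_1,x_2,x_3)=\sum_{i+j\le n}\frac{n!}{i!j!(n-(i+j))!}a_{i,j}x_1^{n-(i+j)}x_2^ix_3^j$; its coordinate ring is identified with $\mathbb{K}[A]=\mathbb{K}[a_{0,0},\dots,a_{0,n}]$, and the coordinate ring of $T_n\oplus\mathbb{K}^3$ with $\mathbb{K}[A,X]=\mathbb{K}[A,x_1,x_2,x_3]$. $SL_3$ acts by substitutions; covariants are elements of $\mathbb{K}[A,X]^{SL_3}$, and the order of a covariant is its degree in $x_1,x_2,x_3$. $\Gamma_{m_1,m_2}$ denotes the irreducible $sl_3$-module with highest weight $[m_1,m_2]$, weights being eigenvalues of the operators $E_1,E_2$ corresponding to $E_{11}-E_{22}$,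 $E_{22}-E_{33}$. The operators $\hat D_1,\hat D_2,\hat D_3$ correspond to the action of the matrix units $E_{21},E_{32},E_{31}$ (and $D_1,D_2,D_3$ to $E_{12},E_{23},E_{13}$); on $X=\langle x_1,x_2,x_3\rangle$ they act as $\hat D_1=-x_1\partial/\partial x_2$, $\hat D_2=-x_2\partial/\partial x_3$, $\hat D_3=-x_1\partial/\partial x_3$, and on $\mathbb{K}[A]$ as derivations with $\hat D_1(a_{i,j})=(n-(i+j))a_{i+1,j}$, $\hat D_2(a_{i,j})=i\,a_{i-1,j+1}$, $\hat D_3(a_{i,j})=(n-(i+j))a_{i,j+1}$. $S^d(X)$ is the $d$-th symmetric power of $X$. For $sl_3$-modules $U,V$, the symmetric product $U\cdot V$ is the subalgebra of $S(U\oplus V)$ generated by products $uv$, with $g(uv)=g(u)v+ug(v)$; an $sl_3$-invariant of $U\cdot V$ is called a Casimir element, it exists iff $U\cong V^*$, and for contragredient (dual) bases $\{u_k\}$, $\{v_k\}$ it equals $\Delta(U,V)=u_1v_1+\dots+u_mv_m$. *)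

theory Defs
  imports Main "HOL-Library.Poly_Mapping"
begin

text \<open>Variables: A i j is the coordinate a_{i,j} of the ternary form, X m is x_m (m = 1,2,3),
  Y m (m = 1,2,3) are auxiliary variables used only to build a concrete model of the
  irreducible sl_3-module Gamma_{d,0} (symmetric power of the standard representation).\<close>

datatype var = A nat nat | X nat | Y nat

type_synonym 'k mpoly = "(var \<Rightarrow>\<^sub>0 nat) \<Rightarrow>\<^sub>0 'k"

definition Var :: "var \<Rightarrow> 'k::comm_ring_1 mpoly" where
  "Var v = Poly_Mapping.single (Poly_Mapping.single v 1) 1"

definition smult :: "'k::comm_ring_1 \<Rightarrow> 'k mpoly \<Rightarrow> 'k mpoly" where
  "smult c p = Poly_Mapping.map (\<lambda>a. c * a) p"

definition const :: "'k::comm_ring_1 \<Rightarrow> 'k mpoly" where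
  "const c = Poly_Mapping.single 0 c"

definition vars :: "'k::comm_ring_1 mpoly \<Rightarrow> var set" where
  "vars p = \<Union> (Poly_Mapping.keys ` Poly_Mapping.keys p)"

definition in_KA :: "nat \<Rightarrow> 'k::comm_ring_1 mpoly \<Rightarrow> bool" where
  "in_KA n p \<longleftrightarrow> vars p \<subseteq> {A i j | i j. i + j \<le> n}"

definition in_KAX :: "nat \<Rightarrow> 'k::comm_ring_1 mpoly \<Rightarrow> bool" where
  "in_KAX n p \<longleftrightarrow> vars p \<subseteq> {A i j | i j. i + j \<le> n} \<union> {X 1, X 2, X 3}"

definition xmon :: "nat \<Rightarrow> nat \<Rightarrow> nat \<Rightarrow> 'k::comm_ring_1 mpoly" where
  "xmon a b c = Var (X 1) ^ a * Var (X 2) ^ b * Var (X 3) ^ c"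

definition ymon :: "nat \<Rightarrow> nat \<Rightarrow> nat \<Rightarrow> 'k::comm_ring_1 mpoly" where
  "ymon a b c = Var (Y 1) ^ a * Var (Y 2) ^ b * Var (Y 3) ^ c"

definition idx :: "nat \<Rightarrow> (nat \<times> nat) set" where
  "idx d = {(i, j). i + j \<le> d}"

definition lin_span :: "'k::comm_ring_1 mpoly set \<Rightarrow> 'k mpoly set" where
  "lin_span S = {p. \<exists>F c. finite F \<and> F \<subseteq> S \<and> p = (\<Sum>s\<in>F. smult (c s) s)}"

definition subspace :: "'k::comm_ring_1 mpoly set \<Rightarrow> bool" where
  "subspace V \<longleftrightarrow> 0 \<in> V \<and> (\<forall>u\<in>V. \<forall>v\<in>V. u + v \<in> V) \<and> (\<forall>c. \<forall>u\<in>V. smult c u \<in> V)"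

text \<open>Generators of sl_3: D1, D2, D3 ~ E12, E23, E13; hD1, hD2, hD3 ~ E21, E32, E31;
  H1 ~ E11 - E22, H2 ~ E22 - E33.\<close>

datatype sl3 = D1 | D2 | D3 | hD1 | hD2 | hD3 | H1 | H2

text \<open>On X: E_kl acts as -x_l d/dx_k (so hD1 = -x1 d/dx2 etc.).
  On A: the action (given in the paper for hD1, hD2, hD3) for which the form u itself
  is invariant. On Y: E_kl acts as y_k d/dy_l (standard representation).\<close>

fun on_var :: "nat \<Rightarrow> sl3 \<Rightarrow> var \<Rightarrow> 'k::comm_ring_1 mpoly" where
  "on_var n D1 (A i j) = of_nat i * Var (A (i - 1) j)"
| "on_var n D2 (A i j) = of_nat j * Var (A (i + 1) (j - 1))"
| "on_var n D3 (A i j) = of_nat j * Var (A i (j - 1))"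
| "on_var n hD1 (A i j) = of_nat (n - (i + j)) * Var (A (i + 1) j)"
| "on_var n hD2 (A i j) = of_nat i * Var (A (i - 1) (j + 1))"
| "on_var n hD3 (A i j) = of_nat (n - (i + j)) * Var (A i (j + 1))"
| "on_var n H1 (A i j) = (of_nat (n - (i + j)) - of_nat i) * Var (A i j)"
| "on_var n H2 (A i j) = (of_nat i - of_nat j) * Var (A i j)"
| "on_var n D1 (X m) = (if m = 1 then - Var (X 2) else 0)"
| "on_var n D2 (X m) = (if m = 2 then - Var (X 3) else 0)"
| "on_var n D3 (X m) = (if m = 1 then - Var (X 3) else 0)"
| "on_var n hD1 (X m) = (if m = 2 then - Var (X 1) else 0)"
| "on_var n hD2 (X m) = (if m = 3 then - Var (X 2) else 0)"
| "on_var n hD3 (X m) = (if m = 3 then - Var (X 1) else 0)"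
| "on_var n H1 (X m) = (if m = 1 then - Var (X 1) else if m = 2 then Var (X 2) else 0)"
| "on_var n H2 (X m) = (if m = 2 then - Var (X 2) else if m = 3 then Var (X 3) else 0)"
| "on_var n D1 (Y m) = (if m = 2 then Var (Y 1) else 0)"
| "on_var n D2 (Y m) = (if m = 3 then Var (Y 2) else 0)"
| "on_var n D3 (Y m) = (if m = 3 then Var (Y 1) else 0)"
| "on_var n hD1 (Y m) = (if m = 1 then Var (Y 2) else 0)"
| "on_var n hD2 (Y m) = (if m = 2 then Var (Y 3) else 0)"
| "on_var n hD3 (Y m) = (if m = 1 then Var (Y 3) else 0)"
| "on_var n H1 (Y m) = (if m = 1 then Var (Y 1) else if m = 2 then - Var (Y 2) else 0)"
| "on_var n H2 (Y m) = (if m = 2 then Var (Y 2) else if m = 3 then - Var (Y 3) else 0)"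

text \<open>Extension of the action on variables to the polynomial ring as a derivation.\<close>

definition act :: "nat \<Rightarrow> sl3 \<Rightarrow> 'k::comm_ring_1 mpoly \<Rightarrow> 'k mpoly" where
  "act n g p = (\<Sum>m\<in>Poly_Mapping.keys p. \<Sum>v\<in>Poly_Mapping.keys m.
      Poly_Mapping.single (m - Poly_Mapping.single v 1)
        (Poly_Mapping.lookup p m * of_nat (Poly_Mapping.lookup m v)) * on_var n g v)"

definition is_covariant :: "nat \<Rightarrow> 'k::comm_ring_1 mpoly \<Rightarrow> bool" where
  "is_covariant n p \<longleftrightarrow> in_KAX n p \<and> (\<forall>g. act n g p = 0)"

fun is_A :: "var \<Rightarrow> bool" where
  "is_A (A i j) = True" | "is_A (X m) = False" | "is_A (Y m) = False"

definition A_deg :: "(var \<Rightarrow>\<^sub>0 nat) \<Rightarrow> nat" where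
  "A_deg m = (\<Sum>v\<in>Poly_Mapping.keys m. if is_A v then Poly_Mapping.lookup m v else 0)"

definition homogA :: "nat \<Rightarrow> 'k::comm_ring_1 mpoly \<Rightarrow> bool" where
  "homogA k p \<longleftrightarrow> (\<forall>m\<in>Poly_Mapping.keys p. A_deg m = k)"

inductive_set gen_alg :: "'k::comm_ring_1 mpoly set \<Rightarrow> 'k mpoly set" for S where
  gen_const: "const c \<in> gen_alg S"
| gen_base: "s \<in> S \<Longrightarrow> s \<in> gen_alg S"
| gen_add: "p \<in> gen_alg S \<Longrightarrow> q \<in> gen_alg S \<Longrightarrow> p + q \<in> gen_alg S"
| gen_mult: "p \<in> gen_alg S \<Longrightarrow> q \<in> gen_alg S \<Longrightarrow> p * q \<in> gen_alg S"

definition irreducible_covariant :: "nat \<Rightarrow> 'k::comm_ring_1 mpoly \<Rightarrow> bool" where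
  "irreducible_covariant n f \<longleftrightarrow> is_covariant n f \<and>
     (\<exists>k. homogA k f \<and> f \<notin> gen_alg {g. is_covariant n g \<and> (\<exists>k'<k. homogA k' g)})"

definition sl3_module :: "nat \<Rightarrow> 'k::comm_ring_1 mpoly set \<Rightarrow> bool" where
  "sl3_module n V \<longleftrightarrow> subspace V \<and> (\<forall>g. \<forall>v\<in>V. act n g v \<in> V)"

definition irreducible_module :: "nat \<Rightarrow> 'k::comm_ring_1 mpoly set \<Rightarrow> bool" where
  "irreducible_module n V \<longleftrightarrow> sl3_module n V \<and> V \<noteq> {0} \<and>
     (\<forall>W. W \<subseteq> V \<and> sl3_module n W \<longrightarrow> W = {0} \<or> W = V)"

definition modules_iso :: "nat \<Rightarrow> 'k::comm_ring_1 mpoly set \<Rightarrow> 'k mpoly set \<Rightarrow> bool" where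
  "modules_iso n V W \<longleftrightarrow> (\<exists>\<phi>. bij_betw \<phi> V W \<and>
     (\<forall>u\<in>V. \<forall>v\<in>V. \<phi> (u + v) = \<phi> u + \<phi> v) \<and>
     (\<forall>c. \<forall>u\<in>V. \<phi> (smult c u) = smult c (\<phi> u)) \<and>
     (\<forall>g. \<forall>u\<in>V. \<phi> (act n g u) = act n g (\<phi> u)))"

text \<open>Concrete model of Gamma_{d,0}: degree-d polynomials in y1,y2,y3 with the standard
  action; its highest vector y1^d has weight [d,0].\<close>

definition Gamma_d0 :: "nat \<Rightarrow> 'k::comm_ring_1 mpoly set" where
  "Gamma_d0 d = lin_span {ymon a b c | a b c. a + b + c = d}"

definition SdX :: "nat \<Rightarrow> 'k::comm_ring_1 mpoly set" where
  "SdX d = lin_span {xmon a b c | a b c. a + b + c = d}"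

definition highest_vector :: "nat \<Rightarrow> 'k::comm_ring_1 mpoly set \<Rightarrow> 'k mpoly \<Rightarrow> nat \<Rightarrow> nat \<Rightarrow> bool" where
  "highest_vector n V v m1 m2 \<longleftrightarrow> v \<in> V \<and> v \<noteq> 0 \<and>
     act n D1 v = 0 \<and> act n D2 v = 0 \<and> act n D3 v = 0 \<and>
     act n H1 v = smult (of_nat m1) v \<and> act n H2 v = smult (of_nat m2) v"

definition is_basis :: "nat \<Rightarrow> 'k::comm_ring_1 mpoly set \<Rightarrow> (nat \<Rightarrow> 'k mpoly) \<Rightarrow> bool" where
  "is_basis N V u \<longleftrightarrow> V = lin_span (u ` {..<N}) \<and>
     (\<forall>a. (\<Sum>k<N. smult (a k) (u k)) = 0 \<longrightarrow> (\<forall>k<N. a k = 0))"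

text \<open>f = Delta(U,V) = u_1 v_1 + ... + u_N v_N for contragredient (dual) bases {u_k} of U and
  {v_k} of V: if g u_k = sum_l c_{lk} u_l then g v_k = - sum_l c_{kl} v_l for every g in sl_3.\<close>

definition is_Casimir :: "nat \<Rightarrow> 'k::comm_ring_1 mpoly set \<Rightarrow> 'k mpoly set \<Rightarrow> 'k mpoly \<Rightarrow> bool" where
  "is_Casimir n U V f \<longleftrightarrow> (\<exists>N u v c. is_basis N U u \<and> is_basis N V v \<and>
     (\<forall>g. \<forall>k<N. act n g (u k) = (\<Sum>l<N. smult (c g l k) (u l)) \<and>
                act n g (v k) = (\<Sum>l<N. smult (- c g k l) (v l))) \<and>
     f = (\<Sum>k<N. u k * v k))"

end

theory Submission
  imports Defs
begin

(* Write f = \<Sum>\<^sub>\<beta> u\<^sub>\<beta> x\<^sup>\<beta> over the monomials x\<^sup>\<beta> of degree d, where u\<^sub>\<beta> is b\<^sub>\<beta> times a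
   multinomial coefficient. Since f is invariant and the u\<^sub>\<beta> do not involve x, comparing the
   coefficients of the x-monomials in g f = 0 shows that the u\<^sub>\<beta> transform by the negative
   transpose of the matrix of g on the x\<^sup>\<beta>; so f is the Casimir element of span {u\<^sub>\<beta>} and
   S\<^sup>d(X) as soon as the u\<^sub>\<beta> are linearly independent. The same argument applied to the
   invariant (x\<^sub>1y\<^sub>1 + x\<^sub>2y\<^sub>2 + x\<^sub>3y\<^sub>3)\<^sup>d shows that suitable multiples of the y-monomials
   transform by the same matrices, whence B\<^sub>d \<cong> \<Gamma>\<^sub>d\<^sub>,\<^sub>0.
   These matrices are monomial. The lowering operators hD1, hD3 produce every u\<^sub>\<beta> from
   u\<^sub>0\<^sub>,\<^sub>0 = b\<^sub>0\<^sub>,\<^sub>0, which gives the formula for f and, as f \<noteq> 0, u\<^sub>0\<^sub>,\<^sub>0 \<noteq> 0. Conversely D1, D3,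
   applied to a nonzero combination of the u\<^sub>\<beta> according to a nonzero coefficient of maximal
   total degree, return a nonzero multiple of u\<^sub>0\<^sub>,\<^sub>0. This yields linear independence and
   irreducibility. *)

abbreviation lookup :: "('a \<Rightarrow>\<^sub>0 'b::zero) \<Rightarrow> 'a \<Rightarrow> 'b" where "lookup \<equiv> Poly_Mapping.lookup"
abbreviation keys :: "('a \<Rightarrow>\<^sub>0 'b::zero) \<Rightarrow> 'a set" where "keys \<equiv> Poly_Mapping.keys"
abbreviation single :: "'a \<Rightarrow> 'b::zero \<Rightarrow> ('a \<Rightarrow>\<^sub>0 'b)" where "single \<equiv> Poly_Mapping.single"

lemma poly_mapping_sum_single: "p = (\<Sum>m\<in>keys p. single m (lookup p m))"
proof (rule poly_mapping_eqI)
  fix k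
  have "lookup (\<Sum>m\<in>keys p. single m (lookup p m)) k = (\<Sum>m\<in>keys p. lookup p m when m = k)"
    by (simp add: lookup_sum lookup_single)
  also have "\<dots> = lookup p k"
    by (cases "k \<in> keys p") (auto simp: when_def in_keys_iff)
  finally show "lookup p k = lookup (\<Sum>m\<in>keys p. single m (lookup p m)) k" by simp
qed

lemma smult_conv_const_mult: "smult c p = const c * (p :: 'k::comm_ring_1 mpoly)"
  unfolding smult_def const_def by (rule mult_map_scale_conv_mult)

lemma const_mult: "const (a * b) = (const a * const b :: 'k::comm_ring_1 mpoly)"
  unfolding const_def by (simp add: mult_single)

lemma const_add: "const (a + b) = (const a + const b :: 'k::comm_ring_1 mpoly)"
  unfolding const_def by (simp add: single_add)

lemma const_diff: "const (a - b) = (const a - const b :: 'k::comm_ring_1 mpoly)"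
  unfolding const_def by (simp add: single_diff)

lemma const_minus: "const (- a) = (- const a :: 'k::comm_ring_1 mpoly)"
  unfolding const_def by (simp add: single_uminus)

lemma const_of_nat: "const (of_nat k) = (of_nat k :: 'k::comm_ring_1 mpoly)"
  unfolding const_def by simp

lemma const_0 [simp]: "const 0 = (0 :: 'k::comm_ring_1 mpoly)"
  unfolding const_def by simp

lemma const_1 [simp]: "const 1 = (1 :: 'k::comm_ring_1 mpoly)"
  unfolding const_def by simp

lemma single_mult_const: "single m (a * b) = const a * (single m b :: 'k::comm_ring_1 mpoly)"
  unfolding const_def by (simp add: mult_single)

lemma lookup_smult: "lookup (smult c p) m = c * lookup (p :: 'k::comm_ring_1 mpoly) m"
  unfolding smult_def by (simp add: Poly_Mapping.map.rep_eq when_def)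

lemma smult_add_left: "smult (a + b) p = smult a p + smult b (p :: 'k::comm_ring_1 mpoly)"
  by (simp add: smult_conv_const_mult const_add distrib_right)

lemma smult_diff_left: "smult (a - b) p = smult a p - smult b (p :: 'k::comm_ring_1 mpoly)"
  by (simp add: smult_conv_const_mult const_diff left_diff_distrib)

lemma smult_smult: "smult a (smult b p) = smult (a * b) (p :: 'k::comm_ring_1 mpoly)"
  by (simp add: smult_conv_const_mult const_mult mult.assoc)

lemma smult_one [simp]: "smult 1 p = (p :: 'k::comm_ring_1 mpoly)"
  by (simp add: smult_conv_const_mult)

lemma smult_zero_left [simp]: "smult 0 p = (0 :: 'k::comm_ring_1 mpoly)"
  by (simp add: smult_conv_const_mult)

lemma smult_zero_right [simp]: "smult c 0 = (0 :: 'k::comm_ring_1 mpoly)"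
  by (simp add: smult_conv_const_mult)

lemma smult_sum: "smult c (\<Sum>i\<in>I. p i) = (\<Sum>i\<in>I. smult c (p i :: 'k::comm_ring_1 mpoly))"
  by (simp add: smult_conv_const_mult sum_distrib_left)

lemma sum_smult: "smult (\<Sum>i\<in>I. c i) p = (\<Sum>i\<in>I. smult (c i) (p :: 'k::comm_ring_1 mpoly))"
  by (induction I rule: infinite_finite_induct) (auto simp: smult_add_left)

lemma smult_mult_left: "smult c p * q = smult c (p * q :: 'k::comm_ring_1 mpoly)"
  by (simp add: smult_conv_const_mult mult.assoc)

lemma smult_mult_right: "p * smult c q = smult c (p * q :: 'k::comm_ring_1 mpoly)"
  by (simp add: smult_conv_const_mult mult.left_commute)

lemma smult_eq_0_iff: "smult c p = 0 \<longleftrightarrow> c = 0 \<or> (p :: 'k::field mpoly) = 0"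
proof
  assume "smult c p = 0"
  then have "c \<noteq> 0 \<Longrightarrow> smult (inverse c) (smult c p) = 0" by simp
  then show "c = 0 \<or> p = 0" by (auto simp: smult_smult)
qed auto

section \<open>The action of \<open>sl\<^sub>3\<close> is by derivations\<close>

text \<open>When \<open>v\<close> does not occur in \<open>m\<close>, the truncated difference \<open>m - single v 1\<close> is harmless:
  its coefficient \<open>lookup m v\<close> is \<open>0\<close>.\<close>

definition act_monom :: "nat \<Rightarrow> sl3 \<Rightarrow> (var \<Rightarrow>\<^sub>0 nat) \<Rightarrow> 'k::comm_ring_1 mpoly" where
  "act_monom n g m = (\<Sum>v\<in>keys m. single (m - single v 1) (of_nat (lookup m v)) * on_var n g v)"

lemma act_conv_act_monom_superset:
  assumes "finite S" "keys p \<subseteq> S"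
  shows "act n g p = (\<Sum>m\<in>S. const (lookup p m) * act_monom n g m)"
proof -
  have "act n g p = (\<Sum>m\<in>keys p. const (lookup p m) * act_monom n g m)"
    unfolding act_def act_monom_def by (simp add: single_mult_const sum_distrib_left mult.assoc)
  also have "\<dots> = (\<Sum>m\<in>S. const (lookup p m) * act_monom n g m)"
    using assms by (intro sum.mono_neutral_left) (auto simp: in_keys_iff)
  finally show ?thesis .
qed

lemma act_single: "act n g (single m a) = const a * (act_monom n g m :: 'k::comm_ring_1 mpoly)"
  by (subst act_conv_act_monom_superset[of "{m}"]) auto

lemma act_add: "act n g (p + q) = act n g p + act n g (q :: 'k::comm_ring_1 mpoly)"
proof -
  have "finite (keys p \<union> keys q)" "keys (p + q) \<subseteq> keys p \<union> keys q"
    by (simp_all add: keys_add)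
  then show ?thesis
    by (simp add: act_conv_act_monom_superset[of "keys p \<union> keys q"] lookup_add const_add
        distrib_right sum.distrib)
qed

lemma act_smult: "act n g (smult c p) = smult c (act n g (p :: 'k::comm_ring_1 mpoly))"
proof -
  have "keys (smult c p) \<subseteq> keys p" by (auto simp: in_keys_iff lookup_smult)
  then have "act n g (smult c p) = (\<Sum>m\<in>keys p. const c * (const (lookup p m) * act_monom n g m))"
    by (simp add: act_conv_act_monom_superset[of "keys p"] lookup_smult const_mult mult.assoc)
  then show ?thesis
    by (simp add: act_conv_act_monom_superset[of "keys p" p] smult_conv_const_mult sum_distrib_left)
qed

lemma act_zero [simp]: "act n g (0 :: 'k::comm_ring_1 mpoly) = 0"
  using act_smult[of n g 0 0] by simp

lemma act_sum: "act n g (\<Sum>i\<in>I. p i) = (\<Sum>i\<in>I. act n g (p i :: 'k::comm_ring_1 mpoly))"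
  by (induction I rule: infinite_finite_induct) (auto simp: act_add)

lemma act_const: "act n g (const c) = (0 :: 'k::comm_ring_1 mpoly)"
  by (simp add: const_def act_single act_monom_def)

lemma act_one [simp]: "act n g (1 :: 'k::comm_ring_1 mpoly) = 0"
  using act_const[of n g 1] by simp

lemma act_Var: "act n g (Var v) = (on_var n g v :: 'k::comm_ring_1 mpoly)"
  by (simp add: Var_def act_single act_monom_def)

lemma single_diff_single_shift:
  "single (m + m' - single v 1) (of_nat (lookup m v) :: 'k::comm_ring_1) =
   single (m - single v 1 + m') (of_nat (lookup m v))"
proof (cases "lookup m v = 0")
  case False
  have "m + m' - single v 1 = m - single v 1 + m'"
    by (rule poly_mapping_eqI) (use False in \<open>auto simp: lookup_minus lookup_add lookup_single when_def\<close>)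
  then show ?thesis by simp
qed simp

lemma act_monom_add:
  "act_monom n g (m + m') = act_monom n g m * single m' 1 + single m 1 * (act_monom n g m' :: 'k::comm_ring_1 mpoly)"
proof -
  let ?S = "keys m \<union> keys m'"
  let ?t = "\<lambda>m v. single (m - single v 1) (of_nat (lookup m v)) * (on_var n g v :: 'k mpoly)"
  have sup: "act_monom n g m = (\<Sum>v\<in>?S. ?t m v)" if "keys m \<subseteq> ?S" for m
    unfolding act_monom_def using that by (intro sum.mono_neutral_left) (auto simp: in_keys_iff)
  have split: "?t (m + m') v = ?t m v * single m' 1 + single m 1 * ?t m' v" for v
  proof -
    have shift_right: "single (a + b) c = single a c * (single b 1 :: 'k mpoly)"
      and shift_left: "single (b + a) c = single b 1 * (single a c :: 'k mpoly)" for a b c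
      by (simp_all add: mult_single)
    have "?t (m + m') v = single (m - single v 1 + m') (of_nat (lookup m v)) * on_var n g v
        + single (m' - single v 1 + m) (of_nat (lookup m' v)) * on_var n g v"
      using single_diff_single_shift[where 'k='k, of m m' v]
        single_diff_single_shift[where 'k='k, of m' m v, unfolded add.commute[of m' m]]
      by (simp only: lookup_add of_nat_add single_add distrib_right)
    then show ?thesis
      unfolding shift_right[of "m - single v 1" m'] add.commute[of "m' - single v 1" m]
        shift_left[of m "m' - single v 1"]
      by (simp only: ac_simps)
  qed
  have "act_monom n g (m + m') = (\<Sum>v\<in>?S. ?t (m + m') v)"
    by (rule sup) (simp add: keys_add)
  also have "\<dots> = (\<Sum>v\<in>?S. ?t m v) * single m' 1 + single m 1 * (\<Sum>v\<in>?S. ?t m' v)"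
    by (simp only: split sum.distrib sum_distrib_left sum_distrib_right)
  also have "\<dots> = act_monom n g m * single m' 1 + single m 1 * act_monom n g m'"
    by (simp only: sup Un_upper1 Un_upper2)
  finally show ?thesis .
qed

lemma act_mult: "act n g (p * q) = act n g p * q + p * act n g (q :: 'k::comm_ring_1 mpoly)"
proof -
  have single: "act n g (single m a * single m' b) =
      act n g (single m a) * single m' b + single m a * act n g (single m' b :: 'k mpoly)" for m m' a b
  proof -
    have "act n g (single m a * single m' b) =
        const (a * b) * (act_monom n g m * single m' 1 + single m 1 * (act_monom n g m' :: 'k mpoly))"
      by (simp only: mult_single act_single act_monom_add)
    also have "\<dots> = (const a * act_monom n g m) * (const b * single m' 1)
        + (const a * single m 1) * (const b * act_monom n g m')"
      by (simp only: const_mult distrib_left ac_simps)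
    finally show ?thesis
      by (simp only: act_single single_mult_const[symmetric] mult_1_right)
  qed
  have "act n g ((\<Sum>m\<in>keys p. single m (lookup p m)) * (\<Sum>m'\<in>keys q. single m' (lookup q m'))) =
     act n g (\<Sum>m\<in>keys p. single m (lookup p m)) * (\<Sum>m'\<in>keys q. single m' (lookup q m')) +
     (\<Sum>m\<in>keys p. single m (lookup p m)) * act n g (\<Sum>m'\<in>keys q. single m' (lookup q m'))"
    by (simp add: sum_product act_sum single sum.distrib)
  then show ?thesis by (simp only: poly_mapping_sum_single[symmetric])
qed

lemma act_power: "act n g (p ^ k) = of_nat k * p ^ (k - 1) * act n g (p :: 'k::comm_ring_1 mpoly)"
proof (induction k)
  case (Suc k)
  then show ?case by (cases k) (simp_all add: act_mult algebra_simps)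
qed simp

lemma funpow_act_smult: "(act n g ^^ k) (smult c p) = smult c ((act n g ^^ k) (p :: 'k::comm_ring_1 mpoly))"
  by (induction k) (auto simp: act_smult)

lemma funpow_act_zero [simp]: "(act n g ^^ k) 0 = (0 :: 'k::comm_ring_1 mpoly)"
  by (induction k) auto

lemma funpow_act_sum: "(act n g ^^ k) (\<Sum>i\<in>I. p i) = (\<Sum>i\<in>I. (act n g ^^ k) (p i :: 'k::comm_ring_1 mpoly))"
  by (induction k) (auto simp: act_sum)

lemma Var_power: "Var v ^ k = (single (single v k) 1 :: 'k::comm_ring_1 mpoly)"
  by (induction k) (simp_all add: Var_def mult_single single_add[symmetric])

definition monom_exp :: "(nat \<Rightarrow> var) \<Rightarrow> nat \<Rightarrow> nat \<Rightarrow> nat \<Rightarrow> var \<Rightarrow>\<^sub>0 nat" where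
  "monom_exp v a b c = single (v 1) a + single (v 2) b + single (v 3) c"

lemma xmon_conv_single: "xmon a b c = (single (monom_exp X a b c) 1 :: 'k::comm_ring_1 mpoly)"
  by (simp add: xmon_def monom_exp_def Var_power mult_single)

lemma ymon_conv_single: "ymon a b c = (single (monom_exp Y a b c) 1 :: 'k::comm_ring_1 mpoly)"
  by (simp add: ymon_def monom_exp_def Var_power mult_single)

text \<open>The monomials of degree \<open>d\<close> are indexed by \<open>idx d\<close>: the pair \<open>(i, j)\<close> stands for
  \<open>x\<^sub>1\<^bsup>d-i-j\<^esup> x\<^sub>2\<^bsup>i\<^esup> x\<^sub>3\<^bsup>j\<^esup>\<close>, as in the expansion of \<open>f\<close>.\<close>

definition xbasis :: "nat \<Rightarrow> nat \<times> nat \<Rightarrow> 'k::comm_ring_1 mpoly" where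
  "xbasis d \<beta> = xmon (d - (fst \<beta> + snd \<beta>)) (fst \<beta>) (snd \<beta>)"

definition ybasis :: "nat \<Rightarrow> nat \<times> nat \<Rightarrow> 'k::comm_ring_1 mpoly" where
  "ybasis d \<beta> = ymon (d - (fst \<beta> + snd \<beta>)) (fst \<beta>) (snd \<beta>)"

lemma finite_idx [simp]: "finite (idx d)"
proof -
  have "idx d \<subseteq> {0..d} \<times> {0..d}" by (auto simp: idx_def)
  then show ?thesis by (rule finite_subset) simp
qed

fun xshift :: "sl3 \<Rightarrow> nat \<times> nat \<Rightarrow> nat \<times> nat" where
  "xshift D1 (i, j) = (i + 1, j)"
| "xshift D2 (i, j) = (i - 1, j + 1)"
| "xshift D3 (i, j) = (i, j + 1)"
| "xshift hD1 (i, j) = (i - 1, j)"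
| "xshift hD2 (i, j) = (i + 1, j - 1)"
| "xshift hD3 (i, j) = (i, j - 1)"
| "xshift H1 (i, j) = (i, j)"
| "xshift H2 (i, j) = (i, j)"

fun xcoeff :: "nat \<Rightarrow> sl3 \<Rightarrow> nat \<times> nat \<Rightarrow> 'k::comm_ring_1" where
  "xcoeff d D1 (i, j) = - of_nat (d - (i + j))"
| "xcoeff d D2 (i, j) = - of_nat i"
| "xcoeff d D3 (i, j) = - of_nat (d - (i + j))"
| "xcoeff d hD1 (i, j) = - of_nat i"
| "xcoeff d hD2 (i, j) = - of_nat j"
| "xcoeff d hD3 (i, j) = - of_nat j"
| "xcoeff d H1 (i, j) = of_nat i - of_nat (d - (i + j))"
| "xcoeff d H2 (i, j) = of_nat j - of_nat i"

lemma act_xmon: "act n g (xmon a b c :: 'k::comm_ring_1 mpoly) =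
   of_nat a * Var (X 1) ^ (a - 1) * on_var n g (X 1) * Var (X 2) ^ b * Var (X 3) ^ c
 + of_nat b * Var (X 1) ^ a * Var (X 2) ^ (b - 1) * on_var n g (X 2) * Var (X 3) ^ c
 + of_nat c * Var (X 1) ^ a * Var (X 2) ^ b * Var (X 3) ^ (c - 1) * on_var n g (X 3)"
  unfolding xmon_def by (simp add: act_mult act_power act_Var algebra_simps)

lemma act_xbasis:
  assumes "\<beta> \<in> idx d"
  shows "act n g (xbasis d \<beta> :: 'k::comm_ring_1 mpoly) = smult (xcoeff d g \<beta>) (xbasis d (xshift g \<beta>))"
proof -
  obtain i j k where \<beta>: "\<beta> = (i, j)" and d: "d = i + j + k"
    using assms by (cases \<beta>) (auto simp: idx_def dest: le_Suc_ex)
  show ?thesis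
    unfolding \<beta> d xbasis_def act_xmon
    by (cases g; cases i; cases j; cases k)
      (simp_all add: xmon_def smult_conv_const_mult const_minus const_of_nat const_add
        const_diff algebra_simps)
qed

definition X_free :: "'k::comm_ring_1 mpoly \<Rightarrow> bool" where
  "X_free p \<longleftrightarrow> (\<forall>m\<in>keys p. \<forall>r. lookup m (X r) = 0)"

lemma X_free_0 [simp]: "X_free 0"
  by (simp add: X_free_def)

lemma X_free_add: "X_free p \<Longrightarrow> X_free q \<Longrightarrow> X_free (p + q)"
  using keys_add[of p q] by (auto simp: X_free_def)

lemma X_free_mult: "X_free p \<Longrightarrow> X_free q \<Longrightarrow> X_free (p * q)"
  using keys_mult[of p q] unfolding X_free_def by (fastforce simp: lookup_add)

lemma X_free_sum: "(\<And>i. i \<in> I \<Longrightarrow> X_free (p i)) \<Longrightarrow> X_free (\<Sum>i\<in>I. p i)"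
  by (induction I rule: infinite_finite_induct) (auto intro: X_free_add)

lemma X_free_single: "(\<And>r. lookup m (X r) = 0) \<Longrightarrow> X_free (single m a)"
  by (simp add: X_free_def)

lemma X_free_minus: "X_free p \<Longrightarrow> X_free (- p)"
  by (simp add: X_free_def)

lemma X_free_of_nat: "X_free (of_nat k)"
  by (metis X_free_single const_def const_of_nat lookup_zero)

lemma X_free_smult: "X_free p \<Longrightarrow> X_free (smult c p)"
  by (auto simp: X_free_def in_keys_iff lookup_smult)

lemma X_free_Var: "(\<And>r. v \<noteq> X r) \<Longrightarrow> X_free (Var v)"
  by (auto simp: Var_def X_free_single lookup_single when_def)

lemma X_free_diff: "X_free p \<Longrightarrow> X_free q \<Longrightarrow> X_free (p - q)"
  using X_free_add[of p "- q"] X_free_minus[of q] by simp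

lemma X_free_on_var:
  assumes "\<And>r. v \<noteq> X r"
  shows "X_free (on_var n g v)"
proof (cases v)
  case (A i j)
  then show ?thesis
    by (cases g) (simp_all add: X_free_mult X_free_Var X_free_of_nat X_free_diff)
next
  case (Y r)
  then show ?thesis
    by (cases g) (simp_all add: X_free_Var X_free_minus)
qed (use assms in simp)

lemma X_free_act: "X_free p \<Longrightarrow> X_free (act n g p)"
  unfolding act_def
proof (intro X_free_sum X_free_mult)
  fix m v assume p: "X_free p" and "m \<in> keys p" and v: "v \<in> keys m"
  then have m: "lookup m (X r) = 0" for r by (auto simp: X_free_def)
  then show "X_free (single (m - single v 1) (lookup p m * of_nat (lookup m v)))"
    by (intro X_free_single) (simp add: lookup_minus)
  show "X_free (on_var n g v)"
    using m v by (intro X_free_on_var) (auto simp: in_keys_iff)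
qed

lemma in_KA_imp_X_free: "in_KA n p \<Longrightarrow> X_free p"
  unfolding in_KA_def vars_def X_free_def by (force simp: in_keys_iff)

lemma lookup_X_free_mult_xmon:
  assumes p: "X_free p" and \<mu>: "\<And>r. lookup \<mu> (X r) = 0"
  shows "lookup (p * xmon a b c) (\<mu> + monom_exp X a' b' c') =
    (if (a, b, c) = (a', b', c') then lookup p \<mu> else 0)"
proof -
  have split: "m + monom_exp X a b c = \<mu> + monom_exp X a' b' c' \<longleftrightarrow> m = \<mu> \<and> (a, b, c) = (a', b', c')"
    if "m \<in> keys p" for m
  proof
    assume eq: "m + monom_exp X a b c = \<mu> + monom_exp X a' b' c'"
    have "lookup m (X r) = 0" for r using p that by (auto simp: X_free_def)
    then have "lookup (m + monom_exp X a b c) (X r) = lookup (monom_exp X a b c) (X r)"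
      and "lookup (\<mu> + monom_exp X a' b' c') (X r) = lookup (monom_exp X a' b' c') (X r)" for r
      using \<mu> by (simp_all add: lookup_add)
    then have "lookup (monom_exp X a b c) (X r) = lookup (monom_exp X a' b' c') (X r)" for r
      using eq by metis
    from this[of 1] this[of 2] this[of 3] have "(a, b, c) = (a', b', c')"
      by (simp add: monom_exp_def lookup_add lookup_single)
    with eq show "m = \<mu> \<and> (a, b, c) = (a', b', c')" by simp
  qed auto
  have "p * xmon a b c = (\<Sum>m\<in>keys p. single m (lookup p m)) * single (monom_exp X a b c) 1"
    by (simp only: xmon_conv_single poly_mapping_sum_single[symmetric])
  also have "\<dots> = (\<Sum>m\<in>keys p. single (m + monom_exp X a b c) (lookup p m))"
    by (simp add: sum_distrib_right mult_single)
  finally have "lookup (p * xmon a b c) (\<mu> + monom_exp X a' b' c') =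
      (\<Sum>m\<in>keys p. lookup p m when m = \<mu> \<and> (a, b, c) = (a', b', c'))"
    by (simp add: lookup_sum lookup_single split cong: sum.cong)
  also have "\<dots> = (if (a, b, c) = (a', b', c') then lookup p \<mu> else 0)"
    by (cases "\<mu> \<in> keys p") (auto simp: when_def in_keys_iff)
  finally show ?thesis .
qed

definition xexp :: "nat \<Rightarrow> nat \<times> nat \<Rightarrow> var \<Rightarrow>\<^sub>0 nat" where
  "xexp d \<beta> = monom_exp X (d - (fst \<beta> + snd \<beta>)) (fst \<beta>) (snd \<beta>)"

lemma lookup_X_free_mult_xbasis:
  assumes "X_free p" "\<And>r. lookup \<mu> (X r) = 0"
  shows "lookup (p * xbasis d \<beta>) (\<mu> + xexp d \<beta>') = (if \<beta> = \<beta>' then lookup p \<mu> else 0)"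
  using lookup_X_free_mult_xmon[OF assms] by (auto simp: xbasis_def xexp_def prod_eq_iff)

definition span_family :: "'i set \<Rightarrow> ('i \<Rightarrow> 'k::comm_ring_1 mpoly) \<Rightarrow> 'k mpoly set" where
  "span_family I w = {p. \<exists>a. p = (\<Sum>\<beta>\<in>I. smult (a \<beta>) (w \<beta>))}"

definition lin_indep_on :: "'i set \<Rightarrow> ('i \<Rightarrow> 'k::comm_ring_1 mpoly) \<Rightarrow> bool" where
  "lin_indep_on I w \<longleftrightarrow> (\<forall>a. (\<Sum>\<beta>\<in>I. smult (a \<beta>) (w \<beta>)) = 0 \<longrightarrow> (\<forall>\<beta>\<in>I. a \<beta> = 0))"

lemma lin_indep_onD:
  "lin_indep_on I w \<Longrightarrow> (\<Sum>\<beta>\<in>I. smult (a \<beta>) (w \<beta>)) = 0 \<Longrightarrow> \<beta> \<in> I \<Longrightarrow> a \<beta> = 0"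
  unfolding lin_indep_on_def by blast

lemma subspace_sum: "subspace V \<Longrightarrow> (\<And>s. s \<in> F \<Longrightarrow> p s \<in> V) \<Longrightarrow> (\<Sum>s\<in>F. p s) \<in> V"
  by (induction F rule: infinite_finite_induct) (auto simp: subspace_def)

lemma subspace_span_family: "subspace (span_family I w)"
  unfolding subspace_def span_family_def
proof (intro conjI ballI allI)
  show "0 \<in> {p. \<exists>a. p = (\<Sum>\<beta>\<in>I. smult (a \<beta>) (w \<beta>))}"
    by (auto intro!: exI[of _ "\<lambda>_. 0"])
next
  fix p q assume "p \<in> {p. \<exists>a. p = (\<Sum>\<beta>\<in>I. smult (a \<beta>) (w \<beta>))}"
    and "q \<in> {p. \<exists>a. p = (\<Sum>\<beta>\<in>I. smult (a \<beta>) (w \<beta>))}"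
  then obtain a \<mu> where "p = (\<Sum>\<beta>\<in>I. smult (a \<beta>) (w \<beta>))" "q = (\<Sum>\<beta>\<in>I. smult (\<mu> \<beta>) (w \<beta>))"
    by auto
  then show "p + q \<in> {p. \<exists>a. p = (\<Sum>\<beta>\<in>I. smult (a \<beta>) (w \<beta>))}"
    by (auto intro!: exI[of _ "\<lambda>\<beta>. a \<beta> + \<mu> \<beta>"] simp: smult_add_left sum.distrib)
next
  fix c p assume "p \<in> {p. \<exists>a. p = (\<Sum>\<beta>\<in>I. smult (a \<beta>) (w \<beta>))}"
  then obtain a where "p = (\<Sum>\<beta>\<in>I. smult (a \<beta>) (w \<beta>))" by auto
  then show "smult c p \<in> {p. \<exists>a. p = (\<Sum>\<beta>\<in>I. smult (a \<beta>) (w \<beta>))}"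
    by (auto intro!: exI[of _ "\<lambda>\<beta>. c * a \<beta>"] simp: smult_sum smult_smult)
qed

lemma sum_smult_delta:
  assumes "finite I" "\<beta>\<^sub>0 \<in> I"
  shows "(\<Sum>\<beta>\<in>I. smult (if \<beta> = \<beta>\<^sub>0 then 1 else 0) (w \<beta>)) = w \<beta>\<^sub>0"
proof -
  have "(\<Sum>\<beta>\<in>I. smult (if \<beta> = \<beta>\<^sub>0 then 1 else 0) (w \<beta>)) = (\<Sum>\<beta>\<in>I. if \<beta> = \<beta>\<^sub>0 then w \<beta> else 0)"
    by (rule sum.cong) simp_all
  then show ?thesis using assms by simp
qed

lemma mem_span_family: "finite I \<Longrightarrow> \<beta> \<in> I \<Longrightarrow> w \<beta> \<in> span_family I w"
  unfolding span_family_def using sum_smult_delta[symmetric] by (intro CollectI exI)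

lemma lin_span_image:
  assumes "finite I"
  shows "lin_span (w ` I) = span_family I w"
proof
  show "lin_span (w ` I) \<subseteq> span_family I w"
  proof
    fix p assume "p \<in> lin_span (w ` I)"
    then obtain F c where F: "F \<subseteq> w ` I" and p: "p = (\<Sum>s\<in>F. smult (c s) s)"
      unfolding lin_span_def by blast
    have "smult (c s) s \<in> span_family I w" if s: "s \<in> F" for s
    proof -
      obtain \<beta> where "\<beta> \<in> I" "s = w \<beta>"
        using s F by blast
      then have "s \<in> span_family I w"
        by (simp add: mem_span_family assms)
      then show ?thesis
        using subspace_span_family[of I w] by (simp add: subspace_def)
    qed
    then show "p \<in> span_family I w"
      unfolding p by (rule subspace_sum[OF subspace_span_family])
  qed
  show "span_family I w \<subseteq> lin_span (w ` I)"
  proof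
    fix p assume "p \<in> span_family I w"
    then obtain a where "p = (\<Sum>\<beta>\<in>I. smult (a \<beta>) (w \<beta>))"
      by (auto simp: span_family_def)
    also have "\<dots> = (\<Sum>s\<in>w ` I. \<Sum>\<beta>\<in>{\<beta>\<in>I. w \<beta> = s}. smult (a \<beta>) (w \<beta>))"
      by (rule sum.image_gen[OF assms])
    also have "\<dots> = (\<Sum>s\<in>w ` I. smult (\<Sum>\<beta>\<in>{\<beta>\<in>I. w \<beta> = s}. a \<beta>) s)"
      by (rule sum.cong) (simp_all add: sum_smult)
    finally have "p = (\<Sum>s\<in>w ` I. smult (\<Sum>\<beta>\<in>{\<beta>\<in>I. w \<beta> = s}. a \<beta>) s)" .
    then show "p \<in> lin_span (w ` I)"
      unfolding lin_span_def using assms by (intro CollectI exI[of _ "w ` I"] conjI) auto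
  qed
qed

lemma lin_indep_on_coeffs_eq:
  assumes "lin_indep_on I w" "(\<Sum>\<beta>\<in>I. smult (a \<beta>) (w \<beta>)) = (\<Sum>\<beta>\<in>I. smult (\<mu> \<beta>) (w \<beta>))" "\<beta> \<in> I"
  shows "a \<beta> = (\<mu> \<beta> :: 'k::comm_ring_1)"
proof -
  have "(\<Sum>\<beta>\<in>I. smult (a \<beta> - \<mu> \<beta>) (w \<beta>)) = 0"
    using assms(2) by (simp add: smult_diff_left sum_subtractf)
  then show ?thesis
    using assms(1,3) lin_indep_onD by fastforce
qed

lemma span_family_smult:
  assumes "\<And>\<beta>. \<beta> \<in> I \<Longrightarrow> c \<beta> \<noteq> (0 :: 'k::field)"
  shows "span_family I (\<lambda>\<beta>. smult (c \<beta>) (w \<beta>)) = span_family I w"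
proof -
  have scale: "(\<Sum>\<beta>\<in>I. smult (a \<beta>) (smult (c \<beta>) (w \<beta>))) = (\<Sum>\<beta>\<in>I. smult (a \<beta> * c \<beta>) (w \<beta>))"
    for a by (simp add: smult_smult)
  have unscale: "(\<Sum>\<beta>\<in>I. smult (a \<beta>) (w \<beta>)) = (\<Sum>\<beta>\<in>I. smult (a \<beta> / c \<beta>) (smult (c \<beta>) (w \<beta>)))"
    for a using assms by (auto simp: smult_smult intro!: sum.cong)
  show ?thesis
  proof (intro set_eqI iffI)
    fix p assume "p \<in> span_family I (\<lambda>\<beta>. smult (c \<beta>) (w \<beta>))"
    then obtain a where "p = (\<Sum>\<beta>\<in>I. smult (a \<beta> * c \<beta>) (w \<beta>))"
      by (auto simp: span_family_def scale)
    then show "p \<in> span_family I w"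
      unfolding span_family_def by (intro CollectI exI)
  next
    fix p assume "p \<in> span_family I w"
    then obtain a where "p = (\<Sum>\<beta>\<in>I. smult (a \<beta> / c \<beta>) (smult (c \<beta>) (w \<beta>)))"
      by (auto simp: span_family_def unscale)
    then show "p \<in> span_family I (\<lambda>\<beta>. smult (c \<beta>) (w \<beta>))"
      unfolding span_family_def by (intro CollectI exI)
  qed
qed

lemma lin_indep_on_smult:
  assumes "\<And>\<beta>. \<beta> \<in> I \<Longrightarrow> c \<beta> \<noteq> (0 :: 'k::field)" "lin_indep_on I w"
  shows "lin_indep_on I (\<lambda>\<beta>. smult (c \<beta>) (w \<beta>))"
  unfolding lin_indep_on_def
proof clarify
  fix a \<beta> assume "(\<Sum>\<beta>\<in>I. smult (a \<beta>) (smult (c \<beta>) (w \<beta>))) = 0" and \<beta>: "\<beta> \<in> I"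
  then have "(\<Sum>\<beta>\<in>I. smult (a \<beta> * c \<beta>) (w \<beta>)) = 0"
    by (simp add: smult_smult)
  then have "a \<beta> * c \<beta> = 0"
    by (rule lin_indep_onD[OF assms(2) _ \<beta>])
  with assms(1) \<beta> show "a \<beta> = 0" by simp
qed

lemma lin_indep_on_single:
  assumes "inj_on m I" "finite I"
  shows "lin_indep_on I (\<lambda>\<beta>. single (m \<beta>) 1 :: 'k::comm_ring_1 mpoly)"
  unfolding lin_indep_on_def
proof clarify
  fix a \<beta> assume sum: "(\<Sum>\<beta>\<in>I. smult (a \<beta>) (single (m \<beta>) 1 :: 'k mpoly)) = 0" and "\<beta> \<in> I"
  have "0 = lookup (\<Sum>\<beta>'\<in>I. smult (a \<beta>') (single (m \<beta>') 1 :: 'k mpoly)) (m \<beta>)"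
    by (simp add: sum)
  also have "\<dots> = (\<Sum>\<beta>'\<in>I. if \<beta>' = \<beta> then a \<beta> else 0)"
    unfolding lookup_sum using assms(1) \<open>\<beta> \<in> I\<close>
    by (intro sum.cong) (auto simp: lookup_smult lookup_single when_def dest: inj_onD)
  also have "\<dots> = a \<beta>"
    using assms(2) \<open>\<beta> \<in> I\<close> by simp
  finally show "a \<beta> = 0" by simp
qed

lemma act_sum_smult_matrix:
  assumes "\<And>\<beta>. \<beta> \<in> I \<Longrightarrow> act n g (v \<beta>) = (\<Sum>\<beta>'\<in>I. smult (c \<beta>' \<beta>) (v \<beta>'))"
  shows "act n g (\<Sum>\<beta>\<in>I. smult (a \<beta>) (v \<beta>)) = (\<Sum>\<beta>'\<in>I. smult (\<Sum>\<beta>\<in>I. a \<beta> * c \<beta>' \<beta>) (v \<beta>' :: 'k::comm_ring_1 mpoly))"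
proof -
  have "act n g (\<Sum>\<beta>\<in>I. smult (a \<beta>) (v \<beta>)) = (\<Sum>\<beta>\<in>I. \<Sum>\<beta>'\<in>I. smult (a \<beta> * c \<beta>' \<beta>) (v \<beta>'))"
    by (simp add: act_sum act_smult assms smult_sum smult_smult)
  also have "\<dots> = (\<Sum>\<beta>'\<in>I. smult (\<Sum>\<beta>\<in>I. a \<beta> * c \<beta>' \<beta>) (v \<beta>'))"
    by (subst sum.swap) (simp add: sum_smult)
  finally show ?thesis .
qed

definition basis_map :: "'i set \<Rightarrow> ('i \<Rightarrow> 'k::comm_ring_1 mpoly) \<Rightarrow> ('i \<Rightarrow> 'k mpoly) \<Rightarrow> 'k mpoly \<Rightarrow> 'k mpoly" where
  "basis_map I v w p = (\<Sum>\<beta>\<in>I. smult ((SOME a. p = (\<Sum>\<beta>\<in>I. smult (a \<beta>) (v \<beta>))) \<beta>) (w \<beta>))"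

lemma basis_map_sum:
  assumes "lin_indep_on I v"
  shows "basis_map I v w (\<Sum>\<beta>\<in>I. smult (a \<beta>) (v \<beta>)) = (\<Sum>\<beta>\<in>I. smult (a \<beta>) (w \<beta>))"
proof -
  let ?p = "\<Sum>\<beta>\<in>I. smult (a \<beta>) (v \<beta>)"
  let ?a = "SOME a. ?p = (\<Sum>\<beta>\<in>I. smult (a \<beta>) (v \<beta>))"
  have "?p = (\<Sum>\<beta>\<in>I. smult (?a \<beta>) (v \<beta>))"
    by (rule someI[of _ a]) (rule refl)
  then have "?a \<beta> = a \<beta>" if "\<beta> \<in> I" for \<beta>
    by (rule lin_indep_on_coeffs_eq[OF assms _ that, symmetric])
  then show ?thesis
    unfolding basis_map_def by (intro sum.cong) simp_all
qed

lemma mem_span_family_iff: "p \<in> span_family I w \<longleftrightarrow> (\<exists>a. p = (\<Sum>\<beta>\<in>I. smult (a \<beta>) (w \<beta>)))"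
  by (simp add: span_family_def)

lemma bij_betw_basis_map:
  assumes v: "lin_indep_on I v" and w: "lin_indep_on I w"
  shows "bij_betw (basis_map I v w) (span_family I v) (span_family I w)"
proof (rule bij_betw_imageI)
  show "inj_on (basis_map I v w) (span_family I v)"
  proof (rule inj_onI)
    fix p q assume "p \<in> span_family I v" "q \<in> span_family I v" and eq: "basis_map I v w p = basis_map I v w q"
    then obtain a b where p: "p = (\<Sum>\<beta>\<in>I. smult (a \<beta>) (v \<beta>))" and q: "q = (\<Sum>\<beta>\<in>I. smult (b \<beta>) (v \<beta>))"
      by (auto simp: mem_span_family_iff)
    have "(\<Sum>\<beta>\<in>I. smult (a \<beta>) (w \<beta>)) = (\<Sum>\<beta>\<in>I. smult (b \<beta>) (w \<beta>))"
      using eq by (simp add: p q basis_map_sum[OF v])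
    then have "a \<beta> = b \<beta>" if "\<beta> \<in> I" for \<beta>
      by (rule lin_indep_on_coeffs_eq[OF w _ that])
    then show "p = q"
      unfolding p q by (intro sum.cong) simp_all
  qed
  show "basis_map I v w ` span_family I v = span_family I w"
  proof (intro set_eqI iffI)
    fix q assume "q \<in> basis_map I v w ` span_family I v"
    then obtain p where q: "q = basis_map I v w p" and "p \<in> span_family I v"
      by blast
    then obtain a where "p = (\<Sum>\<beta>\<in>I. smult (a \<beta>) (v \<beta>))"
      by (auto simp: mem_span_family_iff)
    then have "q = (\<Sum>\<beta>\<in>I. smult (a \<beta>) (w \<beta>))"
      by (simp add: q basis_map_sum[OF v])
    then show "q \<in> span_family I w"
      unfolding mem_span_family_iff by blast
  next
    fix q assume "q \<in> span_family I w"
    then obtain a where "q = (\<Sum>\<beta>\<in>I. smult (a \<beta>) (w \<beta>))"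
      by (auto simp: mem_span_family_iff)
    then have "q = basis_map I v w (\<Sum>\<beta>\<in>I. smult (a \<beta>) (v \<beta>))"
      by (simp add: basis_map_sum[OF v])
    moreover have "(\<Sum>\<beta>\<in>I. smult (a \<beta>) (v \<beta>)) \<in> span_family I v"
      unfolding mem_span_family_iff by blast
    ultimately show "q \<in> basis_map I v w ` span_family I v"
      by blast
  qed
qed

lemma modules_iso_span_family:
  fixes v w :: "'i \<Rightarrow> 'k::comm_ring_1 mpoly"
  assumes v: "lin_indep_on I v" and w: "lin_indep_on I w"
    and act_v: "\<And>g \<beta>. \<beta> \<in> I \<Longrightarrow> act n g (v \<beta>) = (\<Sum>\<beta>'\<in>I. smult (c g \<beta>' \<beta>) (v \<beta>'))"
    and act_w: "\<And>g \<beta>. \<beta> \<in> I \<Longrightarrow> act n g (w \<beta>) = (\<Sum>\<beta>'\<in>I. smult (c g \<beta>' \<beta>) (w \<beta>'))"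
  shows "modules_iso n (span_family I v) (span_family I w)"
  unfolding modules_iso_def
proof (intro exI[of _ "basis_map I v w"] conjI ballI allI)
  show "bij_betw (basis_map I v w) (span_family I v) (span_family I w)"
    using v w by (rule bij_betw_basis_map)
next
  fix p q assume "p \<in> span_family I v" "q \<in> span_family I v"
  then obtain a b where p: "p = (\<Sum>\<beta>\<in>I. smult (a \<beta>) (v \<beta>))" and q: "q = (\<Sum>\<beta>\<in>I. smult (b \<beta>) (v \<beta>))"
    by (auto simp: mem_span_family_iff)
  then have "p + q = (\<Sum>\<beta>\<in>I. smult (a \<beta> + b \<beta>) (v \<beta>))"
    by (simp add: smult_add_left sum.distrib)
  then have "basis_map I v w (p + q) = (\<Sum>\<beta>\<in>I. smult (a \<beta> + b \<beta>) (w \<beta>))"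
    by (simp only: basis_map_sum[OF v])
  then show "basis_map I v w (p + q) = basis_map I v w p + basis_map I v w q"
    by (simp add: p q basis_map_sum[OF v] smult_add_left sum.distrib)
next
  fix r p assume "p \<in> span_family I v"
  then obtain a where p: "p = (\<Sum>\<beta>\<in>I. smult (a \<beta>) (v \<beta>))"
    by (auto simp: mem_span_family_iff)
  then have "smult r p = (\<Sum>\<beta>\<in>I. smult (r * a \<beta>) (v \<beta>))"
    by (simp add: smult_sum smult_smult)
  then have "basis_map I v w (smult r p) = (\<Sum>\<beta>\<in>I. smult (r * a \<beta>) (w \<beta>))"
    by (simp only: basis_map_sum[OF v])
  then show "basis_map I v w (smult r p) = smult r (basis_map I v w p)"
    by (simp add: p basis_map_sum[OF v] smult_sum smult_smult)
next
  fix g p assume "p \<in> span_family I v"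
  then obtain a where p: "p = (\<Sum>\<beta>\<in>I. smult (a \<beta>) (v \<beta>))"
    by (auto simp: mem_span_family_iff)
  show "basis_map I v w (act n g p) = act n g (basis_map I v w p)"
    unfolding p by (simp add: act_sum_smult_matrix act_v act_w basis_map_sum[OF v])
qed

lemma is_basis_reindex:
  assumes e: "bij_betw e {..<N} I" and v: "lin_indep_on I v"
  shows "is_basis N (span_family I v) (\<lambda>k. v (e k))"
  unfolding is_basis_def
proof (intro conjI allI impI)
  have "finite I"
    using e bij_betw_finite by blast
  moreover have "(\<lambda>k. v (e k)) ` {..<N} = v ` I"
    using e by (auto simp: bij_betw_def image_image simp flip: image_comp)
  ultimately show "span_family I v = lin_span ((\<lambda>k. v (e k)) ` {..<N})"
    by (simp add: lin_span_image)
next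
  fix a k assume sum: "(\<Sum>k<N. smult (a k) (v (e k))) = 0" and k: "k < N"
  let ?a = "\<lambda>\<beta>. a (inv_into {..<N} e \<beta>)"
  have inv: "inv_into {..<N} e (e l) = l" if "l < N" for l
    using e that by (simp add: bij_betw_def inv_into_f_f)
  have "(\<Sum>\<beta>\<in>I. smult (?a \<beta>) (v \<beta>)) = (\<Sum>l<N. smult (?a (e l)) (v (e l)))"
    by (rule sum.reindex_bij_betw[OF e, symmetric])
  also have "\<dots> = 0"
    using sum by (simp add: inv)
  moreover have "e k \<in> I"
    using e k by (auto simp: bij_betw_def)
  ultimately have "?a (e k) = 0"
    by (intro lin_indep_onD[OF v]) simp_all
  then show "a k = 0"
    using inv[OF k] by simp
qed

lemma is_Casimir_span_family:
  fixes v w :: "'i \<Rightarrow> 'k::comm_ring_1 mpoly"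
  assumes "finite I" "lin_indep_on I v" "lin_indep_on I w"
    and act_v: "\<And>g \<beta>. \<beta> \<in> I \<Longrightarrow> act n g (v \<beta>) = (\<Sum>\<beta>'\<in>I. smult (c g \<beta>' \<beta>) (v \<beta>'))"
    and act_w: "\<And>g \<beta>. \<beta> \<in> I \<Longrightarrow> act n g (w \<beta>) = (\<Sum>\<beta>'\<in>I. smult (- c g \<beta> \<beta>') (w \<beta>'))"
  shows "is_Casimir n (span_family I v) (span_family I w) (\<Sum>\<beta>\<in>I. v \<beta> * w \<beta>)"
proof -
  define N where "N = card I"
  obtain e where e: "bij_betw e {..<N} I"
    using ex_bij_betw_nat_finite[OF \<open>finite I\<close>] unfolding N_def atLeast0LessThan by blast
  have reindex: "(\<Sum>l<N. p (e l)) = (\<Sum>\<beta>\<in>I. p \<beta>)" for p :: "_ \<Rightarrow> 'k mpoly"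
    by (rule sum.reindex_bij_betw[OF e])
  have e_in: "e k \<in> I" if "k < N" for k
    using e that by (auto simp: bij_betw_def)
  show ?thesis
    unfolding is_Casimir_def
  proof (intro exI conjI allI impI)
    show "is_basis N (span_family I v) (\<lambda>k. v (e k))" "is_basis N (span_family I w) (\<lambda>k. w (e k))"
      using assms(2,3) by (simp_all add: is_basis_reindex[OF e])
    fix g k assume "k < N"
    then show "act n g (v (e k)) = (\<Sum>l<N. smult (c g (e l) (e k)) (v (e l)))"
      and "act n g (w (e k)) = (\<Sum>l<N. smult (- c g (e k) (e l)) (w (e l)))"
      by (simp_all add: act_v act_w e_in reindex[symmetric])
  next
    show "(\<Sum>\<beta>\<in>I. v \<beta> * w \<beta>) = (\<Sum>k<N. v (e k) * w (e k))"
      by (rule reindex[symmetric])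
  qed
qed

lemma monom_exp_eq_iff:
  assumes "inj v"
  shows "monom_exp v a b c = monom_exp v a' b' c' \<longleftrightarrow> (a, b, c) = (a', b', c')"
proof
  assume eq: "monom_exp v a b c = monom_exp v a' b' c'"
  have "lookup (monom_exp v a b c) (v k) = lookup (monom_exp v a' b' c') (v k)" for k
    by (simp only: eq)
  from this[of 1] this[of 2] this[of 3] show "(a, b, c) = (a', b', c')"
    using assms by (simp add: monom_exp_def lookup_add lookup_single inj_eq)
qed simp

lemma lin_indep_xbasis: "lin_indep_on (idx d) (xbasis d :: _ \<Rightarrow> 'k::comm_ring_1 mpoly)"
proof -
  have "inj_on (xexp d) (idx d)"
    by (rule inj_onI) (auto simp: xexp_def monom_exp_eq_iff inj_def prod_eq_iff)
  moreover have "xbasis d = (\<lambda>\<beta>. single (xexp d \<beta>) 1 :: 'k mpoly)"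
    by (simp add: fun_eq_iff xbasis_def xexp_def xmon_conv_single)
  ultimately show ?thesis
    using lin_indep_on_single[of "xexp d" "idx d"] by simp
qed

lemma lin_indep_ybasis: "lin_indep_on (idx d) (ybasis d :: _ \<Rightarrow> 'k::comm_ring_1 mpoly)"
proof -
  let ?e = "\<lambda>\<beta>. monom_exp Y (d - (fst \<beta> + snd \<beta>)) (fst \<beta>) (snd \<beta>)"
  have "inj_on ?e (idx d)"
    by (rule inj_onI) (auto simp: monom_exp_eq_iff inj_def prod_eq_iff)
  moreover have "ybasis d = (\<lambda>\<beta>. single (?e \<beta>) 1 :: 'k mpoly)"
    by (simp add: fun_eq_iff ybasis_def ymon_conv_single)
  ultimately show ?thesis
    using lin_indep_on_single[of ?e "idx d"] by simp
qed

lemma degree_set_conv_idx: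
  "{F a b c | a b c. a + b + c = d} = (\<lambda>\<beta>. F (d - (fst \<beta> + snd \<beta>)) (fst \<beta>) (snd \<beta>)) ` idx d"
proof (intro set_eqI iffI)
  fix p assume "p \<in> {F a b c | a b c. a + b + c = d}"
  then obtain a b c where "p = F a b c" "a + b + c = d" by blast
  then show "p \<in> (\<lambda>\<beta>. F (d - (fst \<beta> + snd \<beta>)) (fst \<beta>) (snd \<beta>)) ` idx d"
    by (intro image_eqI[of _ _ "(b, c)"]) (auto simp: idx_def)
next
  fix p assume "p \<in> (\<lambda>\<beta>. F (d - (fst \<beta> + snd \<beta>)) (fst \<beta>) (snd \<beta>)) ` idx d"
  then obtain i j where "p = F (d - (i + j)) i j" "i + j \<le> d"
    by (auto simp: idx_def)
  then show "p \<in> {F a b c | a b c. a + b + c = d}"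
    by (intro CollectI exI[of _ "d - (i + j)"] exI[of _ i] exI[of _ j]) simp
qed

lemma SdX_eq_span_xbasis: "SdX d = span_family (idx d) (xbasis d)"
  unfolding SdX_def degree_set_conv_idx by (simp add: lin_span_image xbasis_def[abs_def])

lemma Gamma_d0_eq_span_ybasis: "Gamma_d0 d = span_family (idx d) (ybasis d)"
  unfolding Gamma_d0_def degree_set_conv_idx by (simp add: lin_span_image ybasis_def[abs_def])

section \<open>Coefficients of invariant pairings with \<open>S\<^sup>d(X)\<close>\<close>

definition xmatrix :: "nat \<Rightarrow> sl3 \<Rightarrow> nat \<times> nat \<Rightarrow> nat \<times> nat \<Rightarrow> 'k::comm_ring_1" where
  "xmatrix d g \<beta>' \<beta> = (if xshift g \<beta> = \<beta>' then xcoeff d g \<beta> else 0)"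

lemma xshift_in_idx:
  "\<beta> \<in> idx d \<Longrightarrow> xcoeff d g \<beta> \<noteq> (0 :: 'k::{comm_ring_1, ring_char_0}) \<Longrightarrow> xshift g \<beta> \<in> idx d"
  by (cases g; cases \<beta>) (auto simp: idx_def simp del: of_nat_diff)

lemma act_xbasis_matrix:
  assumes "\<beta> \<in> idx d"
  shows "act n g (xbasis d \<beta> :: 'k::{comm_ring_1, ring_char_0} mpoly) =
    (\<Sum>\<beta>'\<in>idx d. smult (xmatrix d g \<beta>' \<beta>) (xbasis d \<beta>'))"
proof -
  have "(\<Sum>\<beta>'\<in>idx d. smult (xmatrix d g \<beta>' \<beta>) (xbasis d \<beta>' :: 'k mpoly)) =
      (\<Sum>\<beta>'\<in>idx d. if xshift g \<beta> = \<beta>' then smult (xcoeff d g \<beta>) (xbasis d (xshift g \<beta>)) else 0)"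
    by (rule sum.cong) (simp_all add: xmatrix_def)
  also have "\<dots> = smult (xcoeff d g \<beta>) (xbasis d (xshift g \<beta>))"
    using xshift_in_idx[OF assms, of g] by (cases "xcoeff d g \<beta> = (0 :: 'k)") auto
  finally show ?thesis
    using act_xbasis[OF assms] by simp
qed

lemma X_free_lookup_eq_0: "X_free p \<Longrightarrow> lookup \<mu> (X r) \<noteq> 0 \<Longrightarrow> lookup p \<mu> = 0"
  by (metis X_free_def in_keys_iff)

text \<open>Proof: compare the coefficients of the \<open>x\<close>-monomials in \<open>g (\<Sum>\<^sub>\<beta> u\<^sub>\<beta> x\<^sup>\<beta>) = 0\<close>.\<close>

lemma act_coeff_contragredient:
  fixes u :: "nat \<times> nat \<Rightarrow> 'k::{comm_ring_1, ring_char_0} mpoly"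
  assumes u: "\<And>\<beta>. \<beta> \<in> idx d \<Longrightarrow> X_free (u \<beta>)"
    and invariant: "act n g (\<Sum>\<beta>\<in>idx d. u \<beta> * xbasis d \<beta>) = 0"
    and \<beta>: "\<beta> \<in> idx d"
  shows "act n g (u \<beta>) = (\<Sum>\<beta>'\<in>idx d. smult (- xmatrix d g \<beta> \<beta>') (u \<beta>'))"
    (is "_ = ?rhs")
proof (rule poly_mapping_eqI)
  fix \<mu>
  show "lookup (act n g (u \<beta>)) \<mu> = lookup ?rhs \<mu>"
  proof (cases "\<forall>r. lookup \<mu> (X r) = 0")
    case False
    then obtain r where "lookup \<mu> (X r) \<noteq> 0" by blast
    moreover have "X_free (act n g (u \<beta>))" "X_free ?rhs"
      by (simp_all add: X_free_act X_free_sum X_free_smult u \<beta>)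
    ultimately show ?thesis
      by (simp add: X_free_lookup_eq_0)
  next
    case True
    have "act n g (\<Sum>\<gamma>\<in>idx d. u \<gamma> * xbasis d \<gamma>) =
        (\<Sum>\<gamma>\<in>idx d. act n g (u \<gamma>) * xbasis d \<gamma>) +
        (\<Sum>\<gamma>\<in>idx d. \<Sum>\<gamma>'\<in>idx d. smult (xmatrix d g \<gamma>' \<gamma>) (u \<gamma> * xbasis d \<gamma>'))"
      by (simp add: act_sum act_mult sum.distrib act_xbasis_matrix sum_distrib_left smult_mult_right)
    then have "lookup ((\<Sum>\<gamma>\<in>idx d. act n g (u \<gamma>) * xbasis d \<gamma>) +
        (\<Sum>\<gamma>\<in>idx d. \<Sum>\<gamma>'\<in>idx d. smult (xmatrix d g \<gamma>' \<gamma>) (u \<gamma> * xbasis d \<gamma>'))) (\<mu> + xexp d \<beta>) = 0"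
      using invariant by simp
    moreover have "lookup (\<Sum>\<gamma>\<in>idx d. act n g (u \<gamma>) * xbasis d \<gamma>) (\<mu> + xexp d \<beta>) =
        lookup (act n g (u \<beta>)) \<mu>"
      using \<beta> True
      by (simp add: lookup_sum lookup_X_free_mult_xbasis X_free_act u cong: sum.cong if_cong)
    moreover have "lookup (\<Sum>\<gamma>\<in>idx d. \<Sum>\<gamma>'\<in>idx d. smult (xmatrix d g \<gamma>' \<gamma>) (u \<gamma> * xbasis d \<gamma>')) (\<mu> + xexp d \<beta>) =
        (\<Sum>\<gamma>\<in>idx d. xmatrix d g \<beta> \<gamma> * lookup (u \<gamma>) \<mu>)"
      using \<beta> True
      by (simp add: lookup_sum lookup_smult lookup_X_free_mult_xbasis u if_distrib[of "\<lambda>x. _ * x"]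
          cong: sum.cong if_cong)
    ultimately have "0 = lookup (act n g (u \<beta>)) \<mu> + (\<Sum>\<gamma>\<in>idx d. xmatrix d g \<beta> \<gamma> * lookup (u \<gamma>) \<mu>)"
      by (simp add: lookup_add)
    then show ?thesis
      by (simp add: lookup_sum lookup_smult eq_neg_iff_add_eq_0 sum_negf add.commute)
  qed
qed

fun yshift :: "sl3 \<Rightarrow> nat \<times> nat \<Rightarrow> nat \<times> nat" where
  "yshift D1 (i, j) = (i - 1, j)"
| "yshift D2 (i, j) = (i + 1, j - 1)"
| "yshift D3 (i, j) = (i, j - 1)"
| "yshift hD1 (i, j) = (i + 1, j)"
| "yshift hD2 (i, j) = (i - 1, j + 1)"
| "yshift hD3 (i, j) = (i, j + 1)"
| "yshift H1 (i, j) = (i, j)"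
| "yshift H2 (i, j) = (i, j)"

definition dual_coeff :: "nat \<Rightarrow> sl3 \<Rightarrow> nat \<times> nat \<Rightarrow> 'k::comm_ring_1" where
  "dual_coeff d g \<beta> =
    (if yshift g \<beta> \<in> idx d \<and> xshift g (yshift g \<beta>) = \<beta> then - xcoeff d g (yshift g \<beta>) else 0)"

lemma xshift_eq_imp_yshift:
  "\<beta>' \<in> idx d \<Longrightarrow> xshift g \<beta>' = \<beta> \<Longrightarrow> xcoeff d g \<beta>' \<noteq> (0 :: 'k::{comm_ring_1, ring_char_0}) \<Longrightarrow>
    \<beta>' = yshift g \<beta>"
  by (cases g; cases \<beta>; cases \<beta>') (auto simp: idx_def)

text \<open>The matrix of \<open>g\<close> on the \<open>x\<^sup>\<beta>\<close> has at most one nonzero entry in each row, so the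
  contragredient action is again monomial.\<close>

lemma sum_dual_xmatrix:
  "(\<Sum>\<beta>'\<in>idx d. smult (- xmatrix d g \<beta> \<beta>') (u \<beta>')) =
    smult (dual_coeff d g \<beta>) (u (yshift g \<beta>) :: 'k::{comm_ring_1, ring_char_0} mpoly)"
proof -
  let ?t = "smult (- xmatrix d g \<beta> (yshift g \<beta>)) (u (yshift g \<beta>))"
  have "smult (- xmatrix d g \<beta> \<beta>') (u \<beta>') = (if \<beta>' = yshift g \<beta> then ?t else 0)"
    if "\<beta>' \<in> idx d" for \<beta>'
  proof (cases "\<beta>' = yshift g \<beta>")
    case False
    then have "xmatrix d g \<beta> \<beta>' = (0 :: 'k)"
      using xshift_eq_imp_yshift[OF that, of g \<beta>] by (auto simp: xmatrix_def)
    with False show ?thesis by simp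
  qed simp
  then have "(\<Sum>\<beta>'\<in>idx d. smult (- xmatrix d g \<beta> \<beta>') (u \<beta>')) =
      (\<Sum>\<beta>'\<in>idx d. if \<beta>' = yshift g \<beta> then ?t else 0)"
    by (rule sum.cong[OF refl])
  also have "\<dots> = (if yshift g \<beta> \<in> idx d then ?t else 0)"
    by (rule sum.delta[OF finite_idx])
  also have "\<dots> = smult (dual_coeff d g \<beta>) (u (yshift g \<beta>))"
    by (simp add: dual_coeff_def xmatrix_def)
  finally show ?thesis .
qed

definition pairing :: "'k::comm_ring_1 mpoly" where
  "pairing = Var (X 1) * Var (Y 1) + Var (X 2) * Var (Y 2) + Var (X 3) * Var (Y 3)"

lemma act_pairing: "act n g pairing = 0"
  by (cases g) (simp_all add: pairing_def act_add act_mult act_Var)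

lemma act_pairing_power: "act n g (pairing ^ d) = 0"
  by (simp add: act_power act_pairing)

definition pairing_coeff :: "nat \<Rightarrow> nat \<times> nat \<Rightarrow> nat" where
  "pairing_coeff d \<beta> = (d choose (fst \<beta> + snd \<beta>)) * (fst \<beta> + snd \<beta> choose snd \<beta>)"

lemma pairing_coeff_nonzero: "\<beta> \<in> idx d \<Longrightarrow> pairing_coeff d \<beta> \<noteq> 0"
  by (auto simp: pairing_coeff_def idx_def)

lemma pairing_power:
  "pairing ^ d = (\<Sum>\<beta>\<in>idx d. smult (of_nat (pairing_coeff d \<beta>)) (ybasis d \<beta>) * xbasis d \<beta>
     :: 'k::comm_ring_1 mpoly)"
proof -
  define P Q R :: "'k mpoly" where "P = Var (X 1) * Var (Y 1)" and "Q = Var (X 2) * Var (Y 2)"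
    and "R = Var (X 3) * Var (Y 3)"
  define t where "t k j = of_nat ((d choose k) * (k choose j)) * (R ^ j * Q ^ (k - j) * P ^ (d - k))" for k j
  have "pairing ^ d = (R + Q + P) ^ d"
    by (simp add: pairing_def P_def Q_def R_def ac_simps)
  also have "\<dots> = (\<Sum>k\<le>d. of_nat (d choose k) * (R + Q) ^ k * P ^ (d - k))"
    by (rule binomial_ring)
  also have "\<dots> = (\<Sum>k\<le>d. \<Sum>j\<le>k. t k j)"
    by (simp add: binomial_ring[of R Q] t_def sum_distrib_left sum_distrib_right mult_ac)
  also have "\<dots> = (\<Sum>(k, j)\<in>Sigma {..d} atMost. t k j)"
    by (rule sum.Sigma) auto
  also have "\<dots> = (\<Sum>\<beta>\<in>idx d. t (fst \<beta> + snd \<beta>) (snd \<beta>))"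
    by (rule sum.reindex_bij_witness[of _ "\<lambda>(i, j). (i + j, j)" "\<lambda>(k, j). (k - j, j)"])
      (auto simp: idx_def)
  also have "\<dots> = (\<Sum>\<beta>\<in>idx d. smult (of_nat (pairing_coeff d \<beta>)) (ybasis d \<beta>) * xbasis d \<beta>)"
    by (rule sum.cong)
      (simp_all add: pairing_coeff_def t_def P_def Q_def R_def xbasis_def xmon_def ybasis_def ymon_def
        smult_conv_const_mult const_mult const_of_nat power_mult_distrib ac_simps)
  finally show ?thesis .
qed

definition ydual :: "nat \<Rightarrow> nat \<times> nat \<Rightarrow> 'k::comm_ring_1 mpoly" where
  "ydual d \<beta> = smult (of_nat (pairing_coeff d \<beta>)) (ybasis d \<beta>)"

lemma X_free_ydual: "X_free (ydual d \<beta>)"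
  by (simp add: ydual_def ybasis_def ymon_conv_single X_free_smult X_free_single monom_exp_def
      lookup_add lookup_single)

text \<open>Applied to the invariant \<open>(x\<^sub>1y\<^sub>1 + x\<^sub>2y\<^sub>2 + x\<^sub>3y\<^sub>3)\<^sup>d\<close>, the contragredience lemma
  exhibits \<open>\<Gamma>\<^sub>d\<^sub>,\<^sub>0\<close> as the dual of \<open>S\<^sup>d(X)\<close>.\<close>

lemma act_ydual:
  assumes "\<beta> \<in> idx d"
  shows "act n g (ydual d \<beta> :: 'k::{comm_ring_1, ring_char_0} mpoly) =
    (\<Sum>\<beta>'\<in>idx d. smult (- xmatrix d g \<beta> \<beta>') (ydual d \<beta>'))"
proof (rule act_coeff_contragredient[OF X_free_ydual _ assms])
  show "act n g (\<Sum>\<beta>\<in>idx d. ydual d \<beta> * xbasis d \<beta>) = (0 :: 'k mpoly)"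
    using act_pairing_power[of n g d] by (simp add: pairing_power ydual_def)
qed

lemma lin_indep_ydual: "lin_indep_on (idx d) (ydual d :: _ \<Rightarrow> 'k::field_char_0 mpoly)"
  unfolding ydual_def[abs_def] using pairing_coeff_nonzero
  by (intro lin_indep_on_smult lin_indep_ybasis) simp

section \<open>Ladders and irreducibility\<close>

lemma funpow_act_ladder:
  fixes w :: "nat \<Rightarrow> 'k::field mpoly"
  assumes step: "\<And>m. m \<le> M \<Longrightarrow> act n g (w m) = smult (c m) (w (m - 1))"
    and c: "\<And>m. m \<le> M \<Longrightarrow> c m = 0 \<longleftrightarrow> m = 0"
    and "m \<le> M"
  shows "\<exists>\<gamma>. (act n g ^^ k) (w m) = smult \<gamma> (w (m - k)) \<and> (\<gamma> = 0 \<longleftrightarrow> m < k)"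
proof (induction k)
  case 0
  show ?case by (intro exI[of _ 1]) simp
next
  case (Suc k)
  then obtain \<gamma> where \<gamma>: "(act n g ^^ k) (w m) = smult \<gamma> (w (m - k))" "\<gamma> = 0 \<longleftrightarrow> m < k"
    by blast
  have "(act n g ^^ Suc k) (w m) = smult \<gamma> (act n g (w (m - k)))"
    using \<gamma>(1) by (simp add: act_smult)
  also have "\<dots> = smult (\<gamma> * c (m - k)) (w (m - Suc k))"
    using \<open>m \<le> M\<close> by (simp add: step smult_smult)
  finally have "(act n g ^^ Suc k) (w m) = smult (\<gamma> * c (m - k)) (w (m - Suc k))" .
  moreover have "c (m - k) = 0 \<longleftrightarrow> m \<le> k"
    using c[of "m - k"] \<open>m \<le> M\<close> by simp
  then have "\<gamma> * c (m - k) = 0 \<longleftrightarrow> m < Suc k"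
    using \<gamma>(2) by auto
  ultimately show ?case by blast
qed

lemma sl3_module_funpow_act: "sl3_module n W \<Longrightarrow> w \<in> W \<Longrightarrow> (act n g ^^ k) w \<in> W"
  by (induction k) (auto simp: sl3_module_def)

lemma sl3_module_smult_cancel:
  assumes "sl3_module n W" "smult c w \<in> W" "c \<noteq> 0"
  shows "(w :: 'k::field mpoly) \<in> W"
proof -
  have "smult (inverse c) (smult c w) \<in> W"
    using assms(1,2) by (simp add: sl3_module_def subspace_def)
  then show ?thesis
    using assms(3) by (simp add: smult_smult)
qed

lemma irreducible_moduleI:
  assumes "sl3_module n V" "v\<^sub>0 \<in> V" "v\<^sub>0 \<noteq> 0"
    and generates: "\<And>W. sl3_module n W \<Longrightarrow> v\<^sub>0 \<in> W \<Longrightarrow> V \<subseteq> W"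
    and reaches: "\<And>W w. sl3_module n W \<Longrightarrow> w \<in> W \<Longrightarrow> w \<in> V \<Longrightarrow> w \<noteq> 0 \<Longrightarrow> v\<^sub>0 \<in> W"
  shows "irreducible_module n V"
  unfolding irreducible_module_def
proof (intro conjI allI impI)
  show "sl3_module n V" "V \<noteq> {0}"
    using assms(1-3) by auto
  fix W assume "W \<subseteq> V \<and> sl3_module n W"
  then have WV: "W \<subseteq> V" and W: "sl3_module n W" by simp_all
  show "W = {0} \<or> W = V"
  proof (cases "W \<subseteq> {0}")
    case False
    then obtain w where "w \<in> W" "w \<noteq> 0" by blast
    then have "v\<^sub>0 \<in> W"
      using W WV reaches by blast
    then show ?thesis
      using W WV generates by blast
  next
    case True
    moreover have "0 \<in> W"
      using W by (simp add: sl3_module_def subspace_def)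
    ultimately show ?thesis by blast
  qed
qed

section \<open>The coefficients of a nonzero covariant\<close>

locale nonzero_covariant =
  fixes n d :: nat and f :: "'k::field_char_0 mpoly" and b :: "nat \<Rightarrow> nat \<Rightarrow> 'k mpoly"
  assumes X_free_b: "\<And>i j. i + j \<le> d \<Longrightarrow> X_free (b i j)"
    and f_eq: "f = (\<Sum>(i, j)\<in>idx d.
          smult (of_nat (fact d) / of_nat (fact i * fact j * fact (d - (i + j))))
            (b i j * xmon (d - (i + j)) i j))"
    and act_f: "\<And>g. act n g f = 0"
    and f_nonzero: "f \<noteq> 0"
begin

definition multinom :: "nat \<times> nat \<Rightarrow> 'k" where
  "multinom \<beta> = of_nat (fact d) / of_nat (fact (fst \<beta>) * fact (snd \<beta>) * fact (d - (fst \<beta> + snd \<beta>)))"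

definition fcoeff :: "nat \<times> nat \<Rightarrow> 'k mpoly" where
  "fcoeff \<beta> = smult (multinom \<beta>) (b (fst \<beta>) (snd \<beta>))"

lemma multinom_nonzero: "multinom \<beta> \<noteq> 0"
  by (simp add: multinom_def)

lemma f_expansion: "f = (\<Sum>\<beta>\<in>idx d. fcoeff \<beta> * xbasis d \<beta>)"
  unfolding f_eq fcoeff_def multinom_def xbasis_def
  by (rule sum.cong) (auto simp: smult_mult_left)

lemma X_free_fcoeff: "\<beta> \<in> idx d \<Longrightarrow> X_free (fcoeff \<beta>)"
  by (cases \<beta>) (simp add: fcoeff_def idx_def X_free_smult X_free_b)

lemma act_fcoeff_matrix:
  "\<beta> \<in> idx d \<Longrightarrow> act n g (fcoeff \<beta>) = (\<Sum>\<beta>'\<in>idx d. smult (- xmatrix d g \<beta> \<beta>') (fcoeff \<beta>'))"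
  by (rule act_coeff_contragredient) (simp_all add: X_free_fcoeff act_f flip: f_expansion)

lemma act_fcoeff:
  "\<beta> \<in> idx d \<Longrightarrow> act n g (fcoeff \<beta>) = smult (dual_coeff d g \<beta>) (fcoeff (yshift g \<beta>))"
  by (simp add: act_fcoeff_matrix sum_dual_xmatrix)

lemma act_D1_fcoeff:
  "i + j \<le> d \<Longrightarrow>
    act n D1 (fcoeff (i, j)) = smult (if i = 0 then 0 else of_nat (d - (i + j) + 1)) (fcoeff (i - 1, j))"
  by (cases i) (auto simp: act_fcoeff dual_coeff_def idx_def Suc_diff_Suc)

lemma act_D3_fcoeff:
  "i + j \<le> d \<Longrightarrow>
    act n D3 (fcoeff (i, j)) = smult (if j = 0 then 0 else of_nat (d - (i + j) + 1)) (fcoeff (i, j - 1))"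
  by (cases j) (auto simp: act_fcoeff dual_coeff_def idx_def Suc_diff_Suc)

lemma act_hD1_fcoeff:
  "i + j \<le> d \<Longrightarrow>
    act n hD1 (fcoeff (i, j)) = (if i + j < d then smult (of_nat (i + 1)) (fcoeff (i + 1, j)) else 0)"
  by (auto simp: act_fcoeff dual_coeff_def idx_def add.commute)

lemma act_hD3_fcoeff:
  "i + j \<le> d \<Longrightarrow>
    act n hD3 (fcoeff (i, j)) = (if i + j < d then smult (of_nat (j + 1)) (fcoeff (i, j + 1)) else 0)"
  by (auto simp: act_fcoeff dual_coeff_def idx_def add.commute)

lemma lower_fcoeff:
  assumes "i + j \<le> d"
  shows "(act n hD1 ^^ i) ((act n hD3 ^^ j) (fcoeff (0, 0))) = smult (of_nat (fact i * fact j)) (fcoeff (i, j))"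
proof -
  have hD3: "(act n hD3 ^^ j) (fcoeff (0, 0)) = smult (of_nat (fact j)) (fcoeff (0, j))" if "j \<le> d" for j
    using that by (induction j) (simp_all add: act_smult act_hD3_fcoeff smult_smult algebra_simps)
  have hD1: "(act n hD1 ^^ i) (fcoeff (0, j)) = smult (of_nat (fact i)) (fcoeff (i, j))" if "i + j \<le> d" for i
    using that by (induction i) (simp_all add: act_smult act_hD1_fcoeff smult_smult algebra_simps)
  show ?thesis
    using assms by (simp add: hD3 hD1 funpow_act_smult smult_smult mult.commute)
qed

lemma raise_fcoeff:
  assumes "(i, j) \<in> idx d"
  shows "\<exists>\<gamma>. (act n D1 ^^ k) ((act n D3 ^^ l) (fcoeff (i, j))) = smult \<gamma> (fcoeff (i - k, j - l))
    \<and> (\<gamma> = 0 \<longleftrightarrow> i < k \<or> j < l)"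
proof -
  have ij: "i + j \<le> d" using assms by (simp add: idx_def)
  have nonzero: "1 + of_nat e \<noteq> (0 :: 'k)" for e
    using of_nat_neq_0[of e, where 'a='k] by simp
  have "\<exists>\<gamma>. (act n D3 ^^ l) (fcoeff (i, j)) = smult \<gamma> (fcoeff (i, j - l)) \<and> (\<gamma> = 0 \<longleftrightarrow> j < l)"
    by (rule funpow_act_ladder[of "d - i" _ _ _ "\<lambda>m. if m = 0 then 0 else of_nat (d - (i + m) + 1)"])
      (use ij in \<open>simp_all add: nonzero act_D3_fcoeff del: of_nat_diff\<close>)
  then obtain \<gamma>\<^sub>3 where \<gamma>\<^sub>3: "(act n D3 ^^ l) (fcoeff (i, j)) = smult \<gamma>\<^sub>3 (fcoeff (i, j - l))" "\<gamma>\<^sub>3 = 0 \<longleftrightarrow> j < l"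
    by blast
  have "\<exists>\<gamma>. (act n D1 ^^ k) (fcoeff (i, j - l)) = smult \<gamma> (fcoeff (i - k, j - l)) \<and> (\<gamma> = 0 \<longleftrightarrow> i < k)"
    by (rule funpow_act_ladder[of "d - (j - l)" _ _ _ "\<lambda>m. if m = 0 then 0 else of_nat (d - (m + (j - l)) + 1)"])
      (use ij in \<open>simp_all add: nonzero act_D1_fcoeff del: of_nat_diff\<close>)
  then obtain \<gamma>\<^sub>1 where \<gamma>\<^sub>1: "(act n D1 ^^ k) (fcoeff (i, j - l)) = smult \<gamma>\<^sub>1 (fcoeff (i - k, j - l))" "\<gamma>\<^sub>1 = 0 \<longleftrightarrow> i < k"
    by blast
  show ?thesis
    using \<gamma>\<^sub>1 \<gamma>\<^sub>3 by (intro exI[of _ "\<gamma>\<^sub>3 * \<gamma>\<^sub>1"]) (auto simp: funpow_act_smult smult_smult)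
qed

text \<open>Applying \<open>D\<^sub>1\<^sup>k D\<^sub>3\<^sup>l\<close> for a nonzero coefficient of maximal total degree \<open>k + l\<close>
  kills all other terms of a combination of the \<open>fcoeff\<close>.\<close>

lemma raise_combination:
  assumes "\<beta>\<^sub>1 \<in> idx d" "a \<beta>\<^sub>1 \<noteq> 0"
  shows "\<exists>k l \<gamma>. \<gamma> \<noteq> 0 \<and>
    (act n D1 ^^ k) ((act n D3 ^^ l) (\<Sum>\<beta>\<in>idx d. smult (a \<beta>) (fcoeff \<beta>))) = smult \<gamma> (fcoeff (0, 0))"
proof -
  obtain k l where kl: "(k, l) \<in> idx d" "a (k, l) \<noteq> 0"
    and max: "\<And>\<beta>. \<beta> \<in> idx d \<Longrightarrow> a \<beta> \<noteq> 0 \<Longrightarrow> fst \<beta> + snd \<beta> \<le> k + l"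
    using Lattices_Big.ex_has_greatest_nat[of "\<lambda>\<beta>. \<beta> \<in> idx d \<and> a \<beta> \<noteq> 0" \<beta>\<^sub>1 "\<lambda>\<beta>. fst \<beta> + snd \<beta>" "Suc d"]
      assms by (force simp: idx_def)
  obtain \<gamma> where \<gamma>: "(act n D1 ^^ k) ((act n D3 ^^ l) (fcoeff (k, l))) = smult \<gamma> (fcoeff (0, 0))" "\<gamma> \<noteq> 0"
    using raise_fcoeff[OF kl(1), of k l] by auto
  have "(act n D1 ^^ k) ((act n D3 ^^ l) (smult (a \<beta>) (fcoeff \<beta>))) =
      (if \<beta> = (k, l) then smult (a (k, l) * \<gamma>) (fcoeff (0, 0)) else 0)" if "\<beta> \<in> idx d" for \<beta>
  proof (cases "\<beta> = (k, l) \<or> a \<beta> = 0")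
    case True
    then show ?thesis using \<gamma> by (auto simp: funpow_act_smult smult_smult)
  next
    case False
    obtain i j where \<beta>: "\<beta> = (i, j)" by fastforce
    then have "i < k \<or> j < l"
      using max[OF that] False by auto
    then show ?thesis
      using raise_fcoeff[of i j k l] that False \<beta> by (auto simp: funpow_act_smult)
  qed
  then have "(act n D1 ^^ k) ((act n D3 ^^ l) (\<Sum>\<beta>\<in>idx d. smult (a \<beta>) (fcoeff \<beta>))) =
      smult (a (k, l) * \<gamma>) (fcoeff (0, 0))"
    using kl(1) by (simp add: funpow_act_sum cong: sum.cong)
  then show ?thesis
    using kl(2) \<gamma>(2) by (intro exI[of _ k] exI[of _ l] exI[of _ "a (k, l) * \<gamma>"]) simp
qed

lemma fcoeff_00_nonzero: "fcoeff (0, 0) \<noteq> 0"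
proof
  assume "fcoeff (0, 0) = 0"
  then have "fcoeff \<beta> = 0" if "\<beta> \<in> idx d" for \<beta>
    using lower_fcoeff[of "fst \<beta>" "snd \<beta>"] that by (cases \<beta>) (auto simp: idx_def smult_eq_0_iff)
  then have "f = 0"
    by (simp add: f_expansion)
  with f_nonzero show False ..
qed

lemma lin_indep_fcoeff: "lin_indep_on (idx d) fcoeff"
  unfolding lin_indep_on_def
proof (intro allI impI ballI)
  fix a \<beta> assume sum: "(\<Sum>\<beta>\<in>idx d. smult (a \<beta>) (fcoeff \<beta>)) = 0" and "\<beta> \<in> idx d"
  show "a \<beta> = 0"
  proof (rule ccontr)
    assume "a \<beta> \<noteq> 0"
    then obtain k l \<gamma> where "\<gamma> \<noteq> 0"
      "(act n D1 ^^ k) ((act n D3 ^^ l) (\<Sum>\<beta>\<in>idx d. smult (a \<beta>) (fcoeff \<beta>))) = smult \<gamma> (fcoeff (0, 0))"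
      using raise_combination \<open>\<beta> \<in> idx d\<close> by blast
    then show False
      using sum fcoeff_00_nonzero by (simp add: smult_eq_0_iff)
  qed
qed
definition B :: "'k mpoly set" where
  "B = span_family (idx d) fcoeff"

lemma lin_span_b: "lin_span {b i j | i j. i + j \<le> d} = B"
proof -
  have "{b i j | i j. i + j \<le> d} = (\<lambda>\<beta>. b (fst \<beta>) (snd \<beta>)) ` idx d"
    unfolding idx_def by (auto simp: image_iff; blast)
  then show ?thesis
    unfolding B_def fcoeff_def[abs_def]
    by (simp add: lin_span_image span_family_smult multinom_nonzero)
qed

lemma sl3_module_B: "sl3_module n B"
  unfolding sl3_module_def
proof (intro conjI allI ballI)
  show "subspace B"
    by (simp add: B_def subspace_span_family)
  fix g v assume "v \<in> B"
  then obtain a where "v = (\<Sum>\<beta>\<in>idx d. smult (a \<beta>) (fcoeff \<beta>))"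
    by (auto simp: B_def span_family_def)
  then have "act n g v = (\<Sum>\<beta>'\<in>idx d. smult (\<Sum>\<beta>\<in>idx d. a \<beta> * - xmatrix d g \<beta> \<beta>') (fcoeff \<beta>'))"
    by (simp add: act_sum_smult_matrix act_fcoeff_matrix)
  then show "act n g v \<in> B"
    unfolding B_def span_family_def
    by (intro CollectI exI[of _ "\<lambda>\<beta>'. \<Sum>\<beta>\<in>idx d. a \<beta> * - xmatrix d g \<beta> \<beta>'"])
qed

lemma fcoeff_in_B: "\<beta> \<in> idx d \<Longrightarrow> fcoeff \<beta> \<in> B"
  by (simp add: B_def mem_span_family)

lemma irreducible_B: "irreducible_module n B"
proof (rule irreducible_moduleI[OF sl3_module_B _ fcoeff_00_nonzero])
  show "fcoeff (0, 0) \<in> B"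
    by (simp add: fcoeff_in_B idx_def)
next
  fix W assume W: "sl3_module n W" and "fcoeff (0, 0) \<in> W"
  have "fcoeff (i, j) \<in> W" if "i + j \<le> d" for i j
  proof (rule sl3_module_smult_cancel[OF W])
    show "smult (of_nat (fact i * fact j)) (fcoeff (i, j)) \<in> W"
      unfolding lower_fcoeff[OF that, symmetric]
      by (intro sl3_module_funpow_act W \<open>fcoeff (0, 0) \<in> W\<close>)
  qed simp
  then have "smult (a \<beta>) (fcoeff \<beta>) \<in> W" if "\<beta> \<in> idx d" for a \<beta>
    using that W by (cases \<beta>) (simp add: idx_def sl3_module_def subspace_def)
  then show "B \<subseteq> W"
    using W by (auto simp: B_def span_family_def sl3_module_def intro: subspace_sum)
next
  fix W w assume W: "sl3_module n W" and "w \<in> W" "w \<in> B" "w \<noteq> 0"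
  then obtain a where w: "w = (\<Sum>\<beta>\<in>idx d. smult (a \<beta>) (fcoeff \<beta>))"
    by (auto simp: B_def span_family_def)
  have "\<exists>\<beta>\<in>idx d. a \<beta> \<noteq> 0"
  proof (rule ccontr)
    assume "\<not> ?thesis"
    then have "w = 0" by (simp add: w)
    with \<open>w \<noteq> 0\<close> show False ..
  qed
  then obtain k l \<gamma> where "\<gamma> \<noteq> 0" and raise: "(act n D1 ^^ k) ((act n D3 ^^ l) w) = smult \<gamma> (fcoeff (0, 0))"
    using raise_combination w by blast
  have "smult \<gamma> (fcoeff (0, 0)) \<in> W"
    unfolding raise[symmetric] by (intro sl3_module_funpow_act W \<open>w \<in> W\<close>)
  then show "fcoeff (0, 0) \<in> W"
    using sl3_module_smult_cancel[OF W] \<open>\<gamma> \<noteq> 0\<close> by blast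
qed

lemma B_iso_Gamma_d0: "modules_iso n B (Gamma_d0 d)"
proof -
  have "of_nat (pairing_coeff d \<beta>) \<noteq> (0 :: 'k)" if "\<beta> \<in> idx d" for \<beta>
    using pairing_coeff_nonzero[OF that] by simp
  then have "Gamma_d0 d = span_family (idx d) (ydual d :: _ \<Rightarrow> 'k mpoly)"
    unfolding Gamma_d0_eq_span_ybasis ydual_def[abs_def] by (rule span_family_smult[symmetric])
  then show ?thesis
    unfolding B_def
    by (auto intro!: modules_iso_span_family lin_indep_fcoeff lin_indep_ydual act_fcoeff_matrix act_ydual)
qed

lemma b_00_eq: "b 0 0 = fcoeff (0, 0)"
  by (simp add: fcoeff_def multinom_def)

lemma highest_vector_b_00: "highest_vector n B (b 0 0) d 0"
  unfolding highest_vector_def b_00_eq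
  using fcoeff_in_B[of "(0, 0)"] fcoeff_00_nonzero
  by (simp add: act_fcoeff dual_coeff_def idx_def)

lemma is_Casimir_f: "is_Casimir n B (SdX d) f"
  unfolding B_def SdX_eq_span_xbasis f_expansion
  by (rule is_Casimir_span_family[where c = "\<lambda>g \<beta>' \<beta>. - xmatrix d g \<beta> \<beta>'"])
    (simp_all add: lin_indep_fcoeff lin_indep_xbasis act_fcoeff_matrix act_xbasis_matrix)

lemma f_eq_lowering:
  "f = (\<Sum>(i, j)\<in>idx d. smult (1 / of_nat (fact i * fact j))
      (((act n hD1) ^^ i) (((act n hD3) ^^ j) (b 0 0)) * xmon (d - (i + j)) i j))"
  unfolding f_expansion b_00_eq
  by (rule sum.cong) (auto simp: lower_fcoeff idx_def smult_mult_left smult_smult xbasis_def)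

end
lemma irreducible_covariant_invariant: "irreducible_covariant n f \<Longrightarrow> act n g f = 0"
  by (simp add: irreducible_covariant_def is_covariant_def)

lemma irreducible_covariant_nonzero: "irreducible_covariant n f \<Longrightarrow> f \<noteq> 0"
  using gen_alg.gen_const[of 0] by (auto simp: irreducible_covariant_def)

theorem mainTheorem4:
  fixes n d :: nat
    and f :: "'k::field_char_0 mpoly"
    and b :: "nat \<Rightarrow> nat \<Rightarrow> 'k mpoly"
  assumes b_in_KA: "\<And>i j. i + j \<le> d \<Longrightarrow> in_KA n (b i j)"
    and f_eq: "f = (\<Sum>(i, j)\<in>idx d.
          smult (of_nat (fact d) / of_nat (fact i * fact j * fact (d - (i + j))))
            (b i j * xmon (d - (i + j)) i j))"
    and irr: "irreducible_covariant n f"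
  shows "irreducible_module n (lin_span {b i j | i j. i + j \<le> d})
       \<and> modules_iso n (lin_span {b i j | i j. i + j \<le> d}) (Gamma_d0 d)
       \<and> highest_vector n (lin_span {b i j | i j. i + j \<le> d}) (b 0 0) d 0
       \<and> is_Casimir n (lin_span {b i j | i j. i + j \<le> d}) (SdX d) f
       \<and> f = (\<Sum>(i, j)\<in>idx d.
          smult (1 / of_nat (fact i * fact j))
            (((act n hD1) ^^ i) (((act n hD3) ^^ j) (b 0 0)) * xmon (d - (i + j)) i j))"
proof -
  interpret nonzero_covariant n d f b
  proof
    show "X_free (b i j)" if "i + j \<le> d" for i j
      using b_in_KA[OF that] by (rule in_KA_imp_X_free)
    show "act n g f = 0" for g
      using irr by (rule irreducible_covariant_invariant)
    show "f \<noteq> 0"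
      using irr by (rule irreducible_covariant_nonzero)
  qed (fact f_eq)
  show ?thesis
    unfolding lin_span_b
    using irreducible_B B_iso_Gamma_d0 highest_vector_b_00 is_Casimir_f f_eq_lowering by blast
qed

end
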